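(* Let $-\infty<a<b<\infty$, let $y:[a,b]\to\mathbb{R}$ be $L$-Lipschitz and let $\gamma=\{t+iy(t):t\in[a,b]\}$. Let $\varphi$ be a subharmonic function on a neighborhood $U$ of $\gamma$ in $\mathbb{C}$ such that the measure $\mu:=\frac{1}{2\pi}\Delta\varphi|_U$ has total mass on $U$ strictly less than $1$. Then $\int_\gamma e^{-\varphi}\,ds<\infty$ (bounded by a constant depending on $L,a,b$, the mass of $\mu$, and $\varphi$).
   Context: $ds$ is arc length on $\gamma$. $\Delta\varphi$ is the Laplacian of $\varphi$ in the sense of distributions (a nonnegative measure). *)

theory Defs
  imports "HOL-Analysis.Analysis"
begin

definition usc_on :: "complex set \<Rightarrow> (complex \<Rightarrow> ereal) \<Rightarrow> bool" where
  "usc_on U \<phi> \<longleftrightarrow> (\<forall>z\<in>U. \<forall>c. \<phi> z < c \<longrightarrow> (\<forall>\<^sub>F w in at z within U. \<phi> w < c))"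

text \<open>Circle average (1/2pi) int_0^{2pi} phi(z + r e^{i theta}) d theta, for a function
  bounded above on the circle (positive part minus negative part, in ereal).\<close>
definition circle_avg :: "(complex \<Rightarrow> ereal) \<Rightarrow> complex \<Rightarrow> real \<Rightarrow> ereal" where
  "circle_avg \<phi> z r =
     ereal (1 / (2 * pi)) *
       (enn2ereal (\<integral>\<^sup>+ \<theta>. e2ennreal (\<phi> (z + of_real r * cis \<theta>)) * indicator {0..2*pi} \<theta> \<partial>lborel)
      - enn2ereal (\<integral>\<^sup>+ \<theta>. e2ennreal (- \<phi> (z + of_real r * cis \<theta>)) * indicator {0..2*pi} \<theta> \<partial>lborel))"

definition subharmonic_on :: "complex set \<Rightarrow> (complex \<Rightarrow> ereal) \<Rightarrow> bool" where
  "subharmonic_on U \<phi> \<longleftrightarrow> open U \<and> (\<forall>z\<in>U. \<phi> z < \<infinity>) \<and> usc_on U \<phi> \<and>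
     (\<forall>z r. 0 < r \<and> cball z r \<subseteq> U \<longrightarrow> \<phi> z \<le> circle_avg \<phi> z r)"

definition dpart :: "complex \<Rightarrow> (complex \<Rightarrow> real) \<Rightarrow> complex \<Rightarrow> real" where
  "dpart v f = (\<lambda>x. frechet_derivative f (at x) v)"

definition smooth_fun :: "(complex \<Rightarrow> real) \<Rightarrow> bool" where
  "smooth_fun f \<longleftrightarrow> (\<forall>vs x. foldr dpart vs f differentiable (at x))"

definition laplacian :: "(complex \<Rightarrow> real) \<Rightarrow> complex \<Rightarrow> real" where
  "laplacian f = (\<lambda>x. dpart 1 (dpart 1 f) x + dpart \<i> (dpart \<i> f) x)"

definition tsupport :: "(complex \<Rightarrow> real) \<Rightarrow> complex set" where
  "tsupport f = closure {x. f x \<noteq> 0}"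

definition test_fun :: "complex set \<Rightarrow> (complex \<Rightarrow> real) \<Rightarrow> bool" where
  "test_fun U \<psi> \<longleftrightarrow> smooth_fun \<psi> \<and> compact (tsupport \<psi>) \<and> tsupport \<psi> \<subseteq> U"

definition distr_laplacian_on :: "complex set \<Rightarrow> (complex \<Rightarrow> ereal) \<Rightarrow> complex measure \<Rightarrow> bool" where
  "distr_laplacian_on U \<phi> \<nu> \<longleftrightarrow>
     sets \<nu> = sets borel \<and> emeasure \<nu> (- U) = 0 \<and>
     (\<forall>K. compact K \<and> K \<subseteq> U \<longrightarrow> emeasure \<nu> K < \<infinity>) \<and>
     (AE z in lborel. z \<in> U \<longrightarrow> \<phi> z \<noteq> - \<infinity>) \<and>
     (\<forall>K. compact K \<and> K \<subseteq> U \<longrightarrow> set_integrable lborel K (\<lambda>z. real_of_ereal (\<phi> z))) \<and>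
     (\<forall>\<psi>. test_fun U \<psi> \<longrightarrow>
        (\<integral>z. real_of_ereal (\<phi> z) * laplacian \<psi> z \<partial>lborel) = (\<integral>z. \<psi> z \<partial>\<nu>))"

definition exp_neg :: "ereal \<Rightarrow> ennreal" where
  "exp_neg x = (if x = - \<infinity> then \<infinity> else ennreal (exp (- real_of_ereal x)))"

end

theory Submission
  imports Defs
begin

text \<open>
  Testing \<open>\<Delta>\<phi> = \<nu>\<close> against \<open>\<psi>(w) = F(\<bar>w - z\<bar>\<^sup>2)\<close>, where \<open>F\<close> is a smooth cutoff of \<open>s \<mapsto> ln (R\<^sup>2/s)\<close>,
  gives a lower bound of Riesz type,
    \<open>\<phi>(z) \<ge> A\<^sub>R \<phi>(z) - (1/2\<pi>) \<integral> max 0 (ln (R/\<bar>w - z\<bar>)) d\<nu>(w)\<close>,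
  where \<open>A\<^sub>R \<phi>(z)\<close> is a smoothly weighted mean of \<open>\<phi>\<close> over the disc of radius \<open>R\<close> about \<open>z\<close>; near \<open>z\<close>
  only the upper semicontinuity of \<open>\<phi>\<close> is needed. These means are bounded for \<open>z\<close> on the compact
  curve \<open>\<gamma>\<close>. If \<open>\<nu>\<close> has mass \<open>M = 2\<pi>m\<close>, Jensen's inequality for the probability measure \<open>\<nu>/M\<close>
  turns the exponential of the potential into an average:
    \<open>exp (-\<phi>(z)) \<le> C (1 + (R powr m / M) \<integral> \<bar>w - z\<bar> powr -m d\<nu>(w))\<close>.
  For \<open>z = t + i y(t)\<close> we have \<open>\<bar>w - z\<bar> \<ge> \<bar>Re w - t\<bar>\<close>, and as \<open>m < 1\<close> the integral of
  \<open>\<bar>Re w - t\<bar> powr -m\<close> over \<open>t \<in> [a, b]\<close> is bounded uniformly in \<open>w\<close>, so Tonelli's theorem gives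
  the claim; the arc-length density \<open>sqrt (1 + y'\<^sup>2)\<close> is bounded because \<open>y\<close> is Lipschitz.
\<close>

section \<open>A smooth step function\<close>

definition exp_inv_pow :: "nat \<Rightarrow> real \<Rightarrow> real" where
  "exp_inv_pow k x = (if x > 0 then exp (- inverse x) * inverse x ^ k else 0)"

lemma exp_inv_pow_tendsto_0: "(exp_inv_pow k \<longlongrightarrow> 0) (at 0)"
proof -
  have "((\<lambda>x. inverse x ^ k / exp (inverse x)) \<longlongrightarrow> (0::real)) (at_right 0)"
    using tendsto_power_div_exp_0 filterlim_inverse_at_top_right by (rule filterlim_compose)
  moreover have "\<forall>\<^sub>F x in at_right 0. inverse x ^ k / exp (inverse x) = exp_inv_pow k x"
    by (simp add: exp_inv_pow_def exp_minus field_simps eventually_mono[OF eventually_at_right_less])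
  ultimately have "(exp_inv_pow k \<longlongrightarrow> 0) (at_right 0)"
    by (rule Lim_transform_eventually)
  moreover have "\<forall>\<^sub>F x in at_left 0. 0 = exp_inv_pow k x"
    by (rule eventually_mono[of "\<lambda>x. x < 0"]) (simp_all add: exp_inv_pow_def eventually_at_filter)
  then have "(exp_inv_pow k \<longlongrightarrow> 0) (at_left 0)"
    by (rule Lim_transform_eventually[OF tendsto_const])
  ultimately show ?thesis
    by (simp add: filterlim_split_at)
qed

lemma exp_inv_pow_has_real_derivative:
  "(exp_inv_pow k has_real_derivative (exp_inv_pow (k + 2) x - real k * exp_inv_pow (k + 1) x)) (at x)"
proof (cases x "0::real" rule: linorder_cases)
  case greater
  define D where "D = exp (- inverse x) * inverse x ^ 2 * inverse x ^ k
    + exp (- inverse x) * (real k * inverse x ^ (k - 1) * - (inverse x ^ 2))"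
  have "((\<lambda>x. exp (- inverse x) * inverse x ^ k) has_real_derivative D) (at x)"
    unfolding D_def using greater by (auto intro!: derivative_eq_intros simp: power2_eq_square)
  moreover have "D = exp_inv_pow (k + 2) x - real k * exp_inv_pow (k + 1) x"
  proof (cases k)
    case 0
    then show ?thesis
      using greater by (simp add: D_def exp_inv_pow_def power2_eq_square)
  next
    case (Suc j)
    then show ?thesis
      using greater by (simp add: D_def exp_inv_pow_def power2_eq_square algebra_simps)
  qed
  ultimately have "((\<lambda>x. exp (- inverse x) * inverse x ^ k) has_real_derivative
      exp_inv_pow (k + 2) x - real k * exp_inv_pow (k + 1) x) (at x)"
    by simp
  then show ?thesis
    by (rule has_field_derivative_transform_within_open[where S="{0<..}"])
      (use greater in \<open>auto simp: exp_inv_pow_def\<close>)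
next
  case less
  have "((\<lambda>_. 0) has_real_derivative exp_inv_pow (k + 2) x - real k * exp_inv_pow (k + 1) x) (at x)"
    using less by (simp add: exp_inv_pow_def)
  then show ?thesis
    by (rule has_field_derivative_transform_within_open[where S="{..<0}"])
      (use less in \<open>auto simp: exp_inv_pow_def\<close>)
next
  case equal
  have "\<forall>\<^sub>F y in at 0. exp_inv_pow (k + 1) y = (exp_inv_pow k y - exp_inv_pow k 0) / (y - 0)"
    by (rule eventually_mono[OF eventually_at_topological[THEN iffD2]])
      (auto simp: exp_inv_pow_def field_simps)
  with exp_inv_pow_tendsto_0[of "k + 1"]
  have "((\<lambda>y. (exp_inv_pow k y - exp_inv_pow k 0) / (y - 0)) \<longlongrightarrow> 0) (at 0)"
    by (rule Lim_transform_eventually)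
  then show ?thesis
    using equal by (simp add: has_field_derivative_iff exp_inv_pow_def)
qed

definition smooth_real :: "(real \<Rightarrow> real) \<Rightarrow> bool" where
  "smooth_real f \<longleftrightarrow> (\<forall>n x. (deriv ^^ n) f differentiable (at x))"

lemma smooth_realI_deriv_closed:
  assumes "\<And>f. f \<in> S \<Longrightarrow> (\<forall>x. f differentiable (at x)) \<and> deriv f \<in> S" and "f \<in> S"
  shows "smooth_real f"
proof -
  have "\<forall>f\<in>S. (deriv ^^ n) f \<in> S" for n
    by (induction n) (auto simp: funpow_Suc_right assms(1) simp del: funpow.simps)
  then show ?thesis
    unfolding smooth_real_def using assms by blast
qed

lemma smooth_real_deriv: "smooth_real f \<Longrightarrow> smooth_real (deriv f)"
  unfolding smooth_real_def by (metis funpow_Suc_right comp_apply)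

lemma smooth_real_has_real_derivative: "smooth_real f \<Longrightarrow> (f has_real_derivative deriv f x) (at x)"
  unfolding smooth_real_def by (metis DERIV_deriv_iff_real_differentiable funpow_0)

lemma smooth_real_continuous_on_deriv:
  assumes "smooth_real f"
  shows "continuous_on S (deriv f)"
proof (rule continuous_at_imp_continuous_on)
  have "deriv f differentiable (at x)" for x
    using assms unfolding smooth_real_def by (metis funpow_0 funpow_Suc_right o_apply)
  then show "\<forall>x\<in>S. isCont (deriv f) x"
    using differentiable_imp_continuous_within by blast
qed

text \<open>Membership in this class, which is closed under differentiation, is how smoothness of
  concrete functions is proved.\<close>

inductive_set smooth_closure :: "(real \<Rightarrow> real) set" where
  const: "(\<lambda>_. c) \<in> smooth_closure"
| ident: "(\<lambda>x. x) \<in> smooth_closure"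
| exp_inv_pow: "exp_inv_pow k \<in> smooth_closure"
| affine: "f \<in> smooth_closure \<Longrightarrow> (\<lambda>x. f (a * x + b)) \<in> smooth_closure"
| add: "f \<in> smooth_closure \<Longrightarrow> g \<in> smooth_closure \<Longrightarrow> (\<lambda>x. f x + g x) \<in> smooth_closure"
| mult: "f \<in> smooth_closure \<Longrightarrow> g \<in> smooth_closure \<Longrightarrow> (\<lambda>x. f x * g x) \<in> smooth_closure"
| inverse: "g \<in> smooth_closure \<Longrightarrow> (\<forall>x. g x \<noteq> 0) \<Longrightarrow> (\<lambda>x. inverse (g x)) \<in> smooth_closure"

lemma smooth_closure_diff:
  assumes "f \<in> smooth_closure" and "g \<in> smooth_closure"
  shows "(\<lambda>x. f x - g x) \<in> smooth_closure"
proof -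
  have "(\<lambda>x. f x + (- 1) * g x) \<in> smooth_closure"
    by (intro smooth_closure.intros assms)
  then show ?thesis
    by simp
qed

lemma smooth_closure_scale:
  "f \<in> smooth_closure \<Longrightarrow> (\<lambda>x. f (x / c)) \<in> smooth_closure"
  using smooth_closure.affine[of f "inverse c" 0] by (simp add: divide_inverse mult.commute)

lemma smooth_closure_has_derivative:
  "f \<in> smooth_closure \<Longrightarrow> \<exists>f'\<in>smooth_closure. \<forall>x. (f has_real_derivative f' x) (at x)"
proof (induction rule: smooth_closure.induct)
  case (const c)
  show ?case
    using smooth_closure.const by (intro bexI[of _ "\<lambda>_. 0"]) auto
next
  case ident
  show ?case
    using smooth_closure.const by (intro bexI[of _ "\<lambda>_. 1"]) auto
next
  case (exp_inv_pow k)
  have "(\<lambda>x. exp_inv_pow (k + 2) x + (- real k) * exp_inv_pow (k + 1) x) \<in> smooth_closure"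
    by (rule smooth_closure.add[OF smooth_closure.exp_inv_pow
          smooth_closure.mult[OF smooth_closure.const smooth_closure.exp_inv_pow]])
  with exp_inv_pow_has_real_derivative[of k] show ?case
    by (intro bexI) auto
next
  case (affine f a b)
  then obtain f' where f': "f' \<in> smooth_closure" "\<forall>x. (f has_real_derivative f' x) (at x)"
    by blast
  have "((\<lambda>x. f (a * x + b)) has_real_derivative a * f' (a * x + b)) (at x)" for x
  proof -
    have "((\<lambda>x. a * x + b) has_real_derivative a) (at x)"
      by (auto intro!: derivative_eq_intros)
    from DERIV_chain2[OF f'(2)[rule_format] this] show ?thesis
      by (simp add: mult.commute)
  qed
  moreover have "(\<lambda>x. a * f' (a * x + b)) \<in> smooth_closure"
    by (rule smooth_closure.mult[OF smooth_closure.const smooth_closure.affine[OF f'(1)]])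
  ultimately show ?case
    by (intro bexI[of _ "\<lambda>x. a * f' (a * x + b)"]) auto
next
  case (add f g)
  then obtain f' g' where f': "f' \<in> smooth_closure" "\<forall>x. (f has_real_derivative f' x) (at x)"
    and g': "g' \<in> smooth_closure" "\<forall>x. (g has_real_derivative g' x) (at x)"
    by blast
  have "(\<lambda>x. f' x + g' x) \<in> smooth_closure"
    by (rule smooth_closure.add[OF f'(1) g'(1)])
  with f'(2) g'(2) show ?case
    by (intro bexI[of _ "\<lambda>x. f' x + g' x"]) (auto intro!: derivative_eq_intros)
next
  case (mult f g)
  then obtain f' g' where f': "f' \<in> smooth_closure" "\<forall>x. (f has_real_derivative f' x) (at x)"
    and g': "g' \<in> smooth_closure" "\<forall>x. (g has_real_derivative g' x) (at x)"
    by blast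
  have "(\<lambda>x. f' x * g x + f x * g' x) \<in> smooth_closure"
    using mult.hyps f'(1) g'(1) by (intro smooth_closure.add smooth_closure.mult)
  with f'(2) g'(2) show ?case
    by (intro bexI[of _ "\<lambda>x. f' x * g x + f x * g' x"]) (auto intro!: derivative_eq_intros)
next
  case (inverse g)
  then obtain g' where g': "g' \<in> smooth_closure" "\<forall>x. (g has_real_derivative g' x) (at x)"
    by blast
  have "(\<lambda>x. (- 1) * g' x * (inverse (g x) * inverse (g x))) \<in> smooth_closure"
    using inverse.hyps g'(1) by (intro smooth_closure.mult smooth_closure.const smooth_closure.inverse)
  with g'(2) inverse.hyps(2) show ?case
    by (intro bexI[of _ "\<lambda>x. (- 1) * g' x * (inverse (g x) * inverse (g x))"])
      (auto intro!: derivative_eq_intros simp: power2_eq_square)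
qed

lemma smooth_closure_differentiable: "f \<in> smooth_closure \<Longrightarrow> f differentiable (at x)"
  using smooth_closure_has_derivative real_differentiable_def by blast

lemma smooth_closure_continuous_on:
  assumes "f \<in> smooth_closure"
  shows "continuous_on S f"
proof (rule continuous_at_imp_continuous_on)
  show "\<forall>x\<in>S. isCont f x"
    using smooth_closure_differentiable[OF assms] differentiable_imp_continuous_within by blast
qed

lemma smooth_closure_deriv_closed:
  assumes "f \<in> smooth_closure"
  shows "(\<forall>x. f differentiable (at x)) \<and> deriv f \<in> smooth_closure"
proof -
  obtain f' where "f' \<in> smooth_closure" "\<forall>x. (f has_real_derivative f' x) (at x)"
    using smooth_closure_has_derivative[OF assms] by blast
  moreover from this(2) have "deriv f = f'"
    using DERIV_imp_deriv by blast
  ultimately show ?thesis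
    using real_differentiable_def by auto
qed

lemma smooth_closure_imp_smooth_real:
  assumes "f \<in> smooth_closure"
  shows "smooth_real f"
proof (rule smooth_realI_deriv_closed[where S = smooth_closure])
  show "f \<in> smooth_closure"
    by (fact assms)
qed (fact smooth_closure_deriv_closed)


lemma exp_inv_pow_0_pos: "x > 0 \<Longrightarrow> exp_inv_pow 0 x > 0"
  by (simp add: exp_inv_pow_def)

lemma exp_inv_pow_0_nonneg: "exp_inv_pow 0 x \<ge> 0"
  by (simp add: exp_inv_pow_def)

lemma exp_inv_pow_eq_0: "x \<le> 0 \<Longrightarrow> exp_inv_pow k x = 0"
  by (simp add: exp_inv_pow_def)

lemma mono_exp_inv_pow_0: "mono (exp_inv_pow 0)"
proof
  fix x y :: real
  assume "x \<le> y"
  then show "exp_inv_pow 0 x \<le> exp_inv_pow 0 y"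
    by (cases "x > 0") (simp_all add: exp_inv_pow_def le_imp_inverse_le)
qed

definition smooth_step :: "real \<Rightarrow> real" where
  "smooth_step x = exp_inv_pow 0 (x - 1/4) / (exp_inv_pow 0 (x - 1/4) + exp_inv_pow 0 (1 - x))"

lemma smooth_step_denominator_pos: "exp_inv_pow 0 (x - 1/4) + exp_inv_pow 0 (1 - x) > 0"
proof (cases "x > 1/4")
  case True
  then show ?thesis
    using exp_inv_pow_0_pos[of "x - 1/4"] exp_inv_pow_0_nonneg[of "1 - x"] by linarith
next
  case False
  then show ?thesis
    using exp_inv_pow_0_pos[of "1 - x"] exp_inv_pow_0_nonneg[of "x - 1/4"] by linarith
qed

lemma smooth_step_in_smooth_closure: "smooth_step \<in> smooth_closure"
proof -
  have e1: "\<And>x. 1 * x + (- 1/4) = x - (1/4 :: real)" and e2: "\<And>x. (- 1) * x + 1 = 1 - (x :: real)"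
    by simp_all
  have r1: "(\<lambda>x. exp_inv_pow 0 (x - 1/4)) \<in> smooth_closure"
    using smooth_closure.affine[OF smooth_closure.exp_inv_pow, of 0 1 "- 1/4"] unfolding e1 .
  have r2: "(\<lambda>x. exp_inv_pow 0 (1 - x)) \<in> smooth_closure"
    using smooth_closure.affine[OF smooth_closure.exp_inv_pow, of 0 "- 1" 1] unfolding e2 .
  have "(\<lambda>x. exp_inv_pow 0 (x - 1/4) * inverse (exp_inv_pow 0 (x - 1/4) + exp_inv_pow 0 (1 - x)))
      \<in> smooth_closure"
    using smooth_closure.mult[OF r1 smooth_closure.inverse[OF smooth_closure.add[OF r1 r2]]]
      smooth_step_denominator_pos by (metis less_irrefl)
  then show ?thesis
    unfolding smooth_step_def[abs_def] divide_inverse .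
qed

lemma smooth_real_smooth_step: "smooth_real smooth_step"
  by (rule smooth_closure_imp_smooth_real[OF smooth_step_in_smooth_closure])

lemma smooth_step_eq_0: "x \<le> 1/4 \<Longrightarrow> smooth_step x = 0"
  by (simp add: smooth_step_def exp_inv_pow_eq_0)

lemma smooth_step_eq_1: "x \<ge> 1 \<Longrightarrow> smooth_step x = 1"
  using smooth_step_denominator_pos[of x] by (simp add: smooth_step_def exp_inv_pow_eq_0)

lemma smooth_step_nonneg: "smooth_step x \<ge> 0"
  using smooth_step_denominator_pos[of x] exp_inv_pow_0_nonneg[of "x - 1/4"]
  by (simp add: smooth_step_def)

lemma smooth_step_le_1: "smooth_step x \<le> 1"
  using smooth_step_denominator_pos[of x] exp_inv_pow_0_nonneg[of "1 - x"]
  by (simp add: smooth_step_def field_simps)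

lemma mono_smooth_step: "mono smooth_step"
proof
  fix x y :: real
  assume xy: "x \<le> y"
  show "smooth_step x \<le> smooth_step y"
  proof (cases "x \<le> 1/4 \<or> y \<ge> 1")
    case True
    then show ?thesis
      using smooth_step_eq_0 smooth_step_eq_1 smooth_step_nonneg smooth_step_le_1 by metis
  next
    case False
    define p q p' q' where "p = exp_inv_pow 0 (x - 1/4)" and "q = exp_inv_pow 0 (1 - x)"
      and "p' = exp_inv_pow 0 (y - 1/4)" and "q' = exp_inv_pow 0 (1 - y)"
    have pos: "p > 0" "q > 0" "p' > 0" "q' > 0"
      using False xy by (auto simp: p_def q_def p'_def q'_def intro!: exp_inv_pow_0_pos)
    have "p \<le> p'" "q' \<le> q"
      using xy mono_exp_inv_pow_0 by (auto simp: p_def q_def p'_def q'_def monoD)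
    then have "p * q' \<le> p' * q"
      using pos by (meson less_eq_real_def mult_mono)
    then have "p * (p' + q') \<le> p' * (p + q)"
      by (simp add: algebra_simps)
    then have "p / (p + q) \<le> p' / (p' + q')"
      using pos by (simp add: divide_le_eq le_divide_eq mult.commute)
    then show ?thesis
      by (simp add: smooth_step_def p_def q_def p'_def q'_def)
  qed
qed

lemma deriv_smooth_step_nonneg: "deriv smooth_step x \<ge> 0"
  by (rule mono_on_imp_deriv_nonneg[OF _ smooth_real_has_real_derivative[OF smooth_real_smooth_step]])
    (use mono_smooth_step in auto)

lemma deriv_smooth_step_eq_0:
  assumes "x \<le> 1/4 \<or> x \<ge> 1"
  shows "deriv smooth_step x = 0"
  using assms
proof
  assume "x \<le> 1/4"
  show ?thesis
  proof (rule DERIV_local_min[OF smooth_real_has_real_derivative[OF smooth_real_smooth_step], of 1])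
    show "\<forall>y. \<bar>x - y\<bar> < 1 \<longrightarrow> smooth_step x \<le> smooth_step y"
      using \<open>x \<le> 1/4\<close> smooth_step_eq_0 smooth_step_nonneg by simp
  qed simp
next
  assume "x \<ge> 1"
  show ?thesis
  proof (rule DERIV_local_max[OF smooth_real_has_real_derivative[OF smooth_real_smooth_step], of 1])
    show "\<forall>y. \<bar>x - y\<bar> < 1 \<longrightarrow> smooth_step y \<le> smooth_step x"
      using \<open>x \<ge> 1\<close> smooth_step_eq_1 smooth_step_le_1 by simp
  qed simp
qed

lemma deriv_smooth_step_bounded: "\<exists>B. \<forall>x. \<bar>deriv smooth_step x\<bar> \<le> B"
proof -
  have "compact (deriv smooth_step ` {0..1})"
    by (intro compact_continuous_image smooth_real_continuous_on_deriv smooth_real_smooth_step) auto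
  then obtain B where "B > 0" and B: "\<forall>y\<in>deriv smooth_step ` {0..1}. norm y \<le> B"
    using compact_imp_bounded bounded_pos by metis
  have "\<bar>deriv smooth_step x\<bar> \<le> B" for x
    using \<open>B > 0\<close> B deriv_smooth_step_eq_0[of x] by (cases "x \<in> {0..1}") auto
  then show ?thesis
    by blast
qed

section \<open>A smooth cutoff of the logarithm\<close>

definition band_step :: "real \<Rightarrow> real \<Rightarrow> real \<Rightarrow> real" where
  "band_step e r s = smooth_step (s / e) - smooth_step (s / r)"

text \<open>\<^term>\<open>smooth_pos_id e\<close> is smooth, positive and agrees with the identity on \<open>[e/8, \<infinity>)\<close>;
  since \<^term>\<open>band_step e r\<close> vanishes on \<open>(-\<infinity>, e/4]\<close>, dividing by it instead of by \<open>s\<close> gives the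
  same function, but one that visibly lies in \<^term>\<open>smooth_closure\<close>.\<close>

definition smooth_pos_id :: "real \<Rightarrow> real \<Rightarrow> real" where
  "smooth_pos_id e s = smooth_step (8 * s / e) * s + (1 - smooth_step (8 * s / e))"

definition log_cutoff_density :: "real \<Rightarrow> real \<Rightarrow> real \<Rightarrow> real" where
  "log_cutoff_density e r s = band_step e r s * inverse (smooth_pos_id e s)"

definition log_cutoff :: "real \<Rightarrow> real \<Rightarrow> real \<Rightarrow> real" where
  "log_cutoff e r s = integral {s..r + 1} (log_cutoff_density e r)"

context
  fixes e r :: real
  assumes e: "0 < e" and er: "e \<le> r"
begin

lemma band_step_eq_0_small:
  assumes "s \<le> e / 4"
  shows "band_step e r s = 0"
proof -
  have "s / e \<le> 1/4"
    using assms e by (simp add: divide_simps)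
  moreover have "s / r \<le> 1/4"
  proof (cases "s \<le> 0")
    case True
    then show ?thesis
      using less_le_trans[OF e er] by (simp add: divide_nonpos_pos)
  next
    case False
    then have "s / r \<le> s / e"
      using e er by (simp add: frac_le)
    with \<open>s / e \<le> 1/4\<close> show ?thesis
      by linarith
  qed
  ultimately show ?thesis
    by (simp add: band_step_def smooth_step_eq_0)
qed

lemma band_step_eq_0_large: "s \<ge> r \<Longrightarrow> band_step e r s = 0"
  using e er by (simp add: band_step_def smooth_step_eq_1)

lemma band_step_nonneg: "band_step e r s \<ge> 0"
proof (cases "s \<le> 0")
  case True
  then have "s / e \<le> 1/4" "s / r \<le> 1/4"
    using e less_le_trans[OF e er] by (auto simp: divide_nonpos_pos)
  then show ?thesis
    by (simp add: band_step_def smooth_step_eq_0)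
next
  case False
  then have "s / r \<le> s / e"
    using e er by (simp add: frac_le)
  then show ?thesis
    using mono_smooth_step by (simp add: band_step_def mono_def)
qed

lemma band_step_le_1: "band_step e r s \<le> 1"
  using smooth_step_le_1[of "s / e"] smooth_step_nonneg[of "s / r"] by (simp add: band_step_def)

lemma smooth_pos_id_pos: "smooth_pos_id e s > 0"
proof -
  define \<sigma> where "\<sigma> = smooth_step (8 * s / e)"
  have \<sigma>: "0 \<le> \<sigma>" "\<sigma> \<le> 1"
    using smooth_step_nonneg smooth_step_le_1 by (auto simp: \<sigma>_def)
  have eq: "smooth_pos_id e s = 1 + \<sigma> * (s - 1)"
    by (simp add: smooth_pos_id_def \<sigma>_def algebra_simps)
  consider "s \<le> 0" | "0 < s" "s \<le> 1" | "1 < s"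
    by linarith
  then show ?thesis
  proof cases
    case 1
    then have "8 * s / e \<le> 1/4"
      using e by (simp add: divide_nonpos_pos)
    then show ?thesis
      by (simp add: smooth_pos_id_def smooth_step_eq_0)
  next
    case 2
    have "\<sigma> * (1 - s) \<le> 1 * (1 - s)"
      using \<sigma> 2 by (intro mult_right_mono) auto
    with 2 show ?thesis
      unfolding eq by (simp add: algebra_simps)
  next
    case 3
    then have "\<sigma> * (s - 1) \<ge> 0"
      using \<sigma> by simp
    then show ?thesis
      unfolding eq by linarith
  qed
qed

lemma smooth_pos_id_eq: "s \<ge> e / 8 \<Longrightarrow> smooth_pos_id e s = s"
  using e by (simp add: smooth_pos_id_def smooth_step_eq_1 divide_simps)

lemma log_cutoff_density_eq: "log_cutoff_density e r s = band_step e r s / s"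
proof (cases "s \<le> e / 4")
  case True
  then show ?thesis
    by (simp add: log_cutoff_density_def band_step_eq_0_small)
next
  case False
  then have "smooth_pos_id e s = s"
    using e by (intro smooth_pos_id_eq) simp
  then show ?thesis
    by (simp add: log_cutoff_density_def divide_inverse)
qed

lemma log_cutoff_density_nonneg: "log_cutoff_density e r s \<ge> 0"
  using band_step_nonneg[of s] smooth_pos_id_pos[of s] by (simp add: log_cutoff_density_def)

lemma log_cutoff_density_eq_0: "s \<ge> r \<Longrightarrow> log_cutoff_density e r s = 0"
  by (simp add: log_cutoff_density_def band_step_eq_0_large)

lemma log_cutoff_density_le: "s > 0 \<Longrightarrow> log_cutoff_density e r s \<le> 1 / s"
  using band_step_le_1[of s] by (simp add: log_cutoff_density_eq divide_right_mono)

lemma band_step_in_smooth_closure: "band_step e r \<in> smooth_closure"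
  unfolding band_step_def[abs_def]
  by (intro smooth_closure_diff smooth_closure_scale smooth_step_in_smooth_closure)

lemma smooth_pos_id_in_smooth_closure: "smooth_pos_id e \<in> smooth_closure"
proof -
  have "(\<lambda>s. smooth_step (s / (e / 8))) \<in> smooth_closure"
    by (intro smooth_closure_scale smooth_step_in_smooth_closure)
  then have "(\<lambda>s. smooth_step (s / (e / 8)) * s + (1 - smooth_step (s / (e / 8)))) \<in> smooth_closure"
    by (intro smooth_closure.add smooth_closure.mult smooth_closure_diff smooth_closure.ident
        smooth_closure.const)
  moreover have "(\<lambda>s. smooth_step (s / (e / 8)) * s + (1 - smooth_step (s / (e / 8)))) = smooth_pos_id e"
    by (rule ext) (simp add: smooth_pos_id_def mult.commute)
  ultimately show ?thesis
    by simp
qed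

lemma log_cutoff_density_in_smooth_closure: "log_cutoff_density e r \<in> smooth_closure"
proof -
  have "\<forall>s. smooth_pos_id e s \<noteq> 0"
    using smooth_pos_id_pos by (metis less_irrefl)
  then show ?thesis
    unfolding log_cutoff_density_def[abs_def]
    by (intro smooth_closure.mult smooth_closure.inverse band_step_in_smooth_closure
        smooth_pos_id_in_smooth_closure)
qed

lemma continuous_on_log_cutoff_density: "continuous_on S (log_cutoff_density e r)"
  by (rule smooth_closure_continuous_on[OF log_cutoff_density_in_smooth_closure])

lemma log_cutoff_density_integrable: "log_cutoff_density e r integrable_on {a..b}"
  by (rule integrable_continuous_real[OF continuous_on_log_cutoff_density])

lemma log_cutoff_eq_0: "s \<ge> r \<Longrightarrow> log_cutoff e r s = 0"
  unfolding log_cutoff_def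
  by (rule integral_unique, rule has_integral_is_0) (auto intro: log_cutoff_density_eq_0)

lemma log_cutoff_eq_integral:
  assumes "s \<le> r"
  shows "log_cutoff e r s = integral {s..r} (log_cutoff_density e r)"
proof -
  have "integral {s..r} (log_cutoff_density e r) + integral {r..r + 1} (log_cutoff_density e r)
      = integral {s..r + 1} (log_cutoff_density e r)"
    by (rule Henstock_Kurzweil_Integration.integral_combine[OF assms _ log_cutoff_density_integrable])
      simp
  moreover have "integral {r..r + 1} (log_cutoff_density e r) = 0"
    using log_cutoff_eq_0[of r] by (simp add: log_cutoff_def)
  ultimately show ?thesis
    by (simp add: log_cutoff_def)
qed

lemma log_cutoff_has_real_derivative:
  "(log_cutoff e r has_real_derivative - log_cutoff_density e r s) (at s)"
proof (cases "s < r + 1")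
  case True
  have "((\<lambda>x. integral {x..r + 1} (log_cutoff_density e r)) has_real_derivative
      - log_cutoff_density e r s) (at s within {s - 1..r + 1})"
    using True by (intro integral_has_real_derivative' continuous_on_log_cutoff_density) auto
  then show ?thesis
    using True by (subst (asm) at_within_interior) (auto simp: log_cutoff_def[abs_def])
next
  case False
  have "((\<lambda>_. 0) has_real_derivative 0) (at s)"
    by simp
  then have "(log_cutoff e r has_real_derivative 0) (at s)"
    by (rule has_field_derivative_transform_within_open[where S = "{r<..}"])
      (use False less_le_trans[OF e er] in \<open>auto intro: log_cutoff_eq_0\<close>)
  moreover have "log_cutoff_density e r s = 0"
    using False by (intro log_cutoff_density_eq_0) simp
  ultimately show ?thesis
    by simp
qed

lemma deriv_log_cutoff: "deriv (log_cutoff e r) = (\<lambda>s. - log_cutoff_density e r s)"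
  using log_cutoff_has_real_derivative DERIV_imp_deriv by fastforce

lemma smooth_real_log_cutoff: "smooth_real (log_cutoff e r)"
proof (rule smooth_realI_deriv_closed[where S = "insert (log_cutoff e r) smooth_closure"])
  fix f
  assume "f \<in> insert (log_cutoff e r) smooth_closure"
  then consider "f = log_cutoff e r" | "f \<in> smooth_closure"
    by blast
  then show "(\<forall>x. f differentiable (at x)) \<and> deriv f \<in> insert (log_cutoff e r) smooth_closure"
  proof cases
    case 1
    have "(\<lambda>s. (- 1) * log_cutoff_density e r s) \<in> smooth_closure"
      by (intro smooth_closure.mult smooth_closure.const log_cutoff_density_in_smooth_closure)
    then show ?thesis
      using 1 log_cutoff_has_real_derivative real_differentiable_def by (auto simp: deriv_log_cutoff)
  next
    case 2
    then show ?thesis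
      using smooth_closure_deriv_closed by blast
  qed
qed simp

lemma log_cutoff_nonneg: "log_cutoff e r s \<ge> 0"
proof (cases "s \<le> r")
  case True
  then show ?thesis
    by (simp add: log_cutoff_eq_integral integral_nonneg log_cutoff_density_integrable
        log_cutoff_density_nonneg)
next
  case False
  then show ?thesis
    by (simp add: log_cutoff_eq_0)
qed

lemma log_cutoff_le_ln:
  assumes "0 < s" and "s \<le> r"
  shows "log_cutoff e r s \<le> ln r - ln s"
proof -
  have "\<forall>x\<in>{s..r}. (ln has_vector_derivative 1 / x) (at x within {s..r})"
    using assms
    by (auto intro!: derivative_eq_intros simp: has_real_derivative_iff_has_vector_derivative[symmetric])
  from fundamental_theorem_of_calculus[OF assms(2) this[rule_format]]
  have "((\<lambda>t. 1 / t) has_integral (ln r - ln s)) {s..r}"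
    by simp
  then have "integral {s..r} (log_cutoff_density e r) \<le> ln r - ln s"
    using assms
    by (intro has_integral_le[OF integrable_integral[OF log_cutoff_density_integrable]])
      (auto intro!: log_cutoff_density_le)
  then show ?thesis
    using log_cutoff_eq_integral assms by simp
qed

lemma mult_log_cutoff_density: "(\<lambda>s. s * log_cutoff_density e r s) = band_step e r"
proof
  fix s
  show "s * log_cutoff_density e r s = band_step e r s"
    using e by (cases "s = 0") (simp_all add: log_cutoff_density_eq band_step_eq_0_small)
qed

lemma deriv_band_step:
  "deriv (band_step e r) s = deriv smooth_step (s / e) / e - deriv smooth_step (s / r) / r"
proof -
  have "((\<lambda>s. smooth_step (s / e) - smooth_step (s / r)) has_real_derivative
      deriv smooth_step (s / e) * (1 / e) - deriv smooth_step (s / r) * (1 / r)) (at s)"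
    using e less_le_trans[OF e er]
    by (intro derivative_intros DERIV_chain2[OF smooth_real_has_real_derivative[OF smooth_real_smooth_step]])
      (auto intro!: derivative_eq_intros)
  then show ?thesis
    by (intro DERIV_imp_deriv) (simp add: band_step_def[abs_def])
qed

text \<open>Since \<open>s F'(s) = -\<close>\<^term>\<open>band_step e r s\<close>, the radial Laplacian \<open>F' + s F''\<close> of
  \<open>F =\<close> \<^term>\<open>log_cutoff e r\<close> is \<open>-\<close>\<^term>\<open>deriv (band_step e r)\<close>.\<close>

lemma log_cutoff_radial_laplacian:
  "deriv (log_cutoff e r) s + s * deriv (deriv (log_cutoff e r)) s
    = deriv smooth_step (s / r) / r - deriv smooth_step (s / e) / e"
proof -
  obtain G' where G': "\<forall>x. (log_cutoff_density e r has_real_derivative G' x) (at x)"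
    using smooth_closure_has_derivative[OF log_cutoff_density_in_smooth_closure] by blast
  have "deriv (deriv (log_cutoff e r)) s = - G' s"
    unfolding deriv_log_cutoff using G' by (intro DERIV_imp_deriv) (auto intro!: derivative_eq_intros)
  moreover have "((\<lambda>s. s * log_cutoff_density e r s) has_real_derivative
      log_cutoff_density e r s + s * G' s) (at s)"
    using G' by (auto intro!: derivative_eq_intros)
  then have "deriv (band_step e r) s = log_cutoff_density e r s + s * G' s"
    unfolding mult_log_cutoff_density by (rule DERIV_imp_deriv)
  ultimately show ?thesis
    using deriv_band_step by (simp add: deriv_log_cutoff)
qed

end

section \<open>Smooth radial functions in the plane\<close>

inductive_set plane_smooth_closure :: "(complex \<Rightarrow> real) set" where
  const: "(\<lambda>_. c) \<in> plane_smooth_closure"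
| re: "(\<lambda>w. Re w) \<in> plane_smooth_closure"
| im: "(\<lambda>w. Im w) \<in> plane_smooth_closure"
| radial: "smooth_real F \<Longrightarrow> (\<lambda>w. F ((Re w - a)\<^sup>2 + (Im w - b)\<^sup>2)) \<in> plane_smooth_closure"
| add: "f \<in> plane_smooth_closure \<Longrightarrow> g \<in> plane_smooth_closure \<Longrightarrow> (\<lambda>x. f x + g x) \<in> plane_smooth_closure"
| diff: "f \<in> plane_smooth_closure \<Longrightarrow> g \<in> plane_smooth_closure \<Longrightarrow> (\<lambda>x. f x - g x) \<in> plane_smooth_closure"
| mult: "f \<in> plane_smooth_closure \<Longrightarrow> g \<in> plane_smooth_closure \<Longrightarrow> (\<lambda>x. f x * g x) \<in> plane_smooth_closure"

lemma has_derivative_dist_square: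
  "((\<lambda>w. (Re w - a)\<^sup>2 + (Im w - b)\<^sup>2) has_derivative
     (\<lambda>h. 2 * (Re x - a) * Re h + 2 * (Im x - b) * Im h)) (at x)"
  by (auto intro!: derivative_eq_intros simp: algebra_simps)

lemma has_derivative_radial:
  assumes "smooth_real F"
  shows "((\<lambda>w. F ((Re w - a)\<^sup>2 + (Im w - b)\<^sup>2)) has_derivative
     (\<lambda>h. deriv F ((Re x - a)\<^sup>2 + (Im x - b)\<^sup>2) * (2 * (Re x - a) * Re h + 2 * (Im x - b) * Im h))) (at x)"
proof -
  have "(F has_derivative (\<lambda>h. deriv F ((Re x - a)\<^sup>2 + (Im x - b)\<^sup>2) * h))
      (at ((Re x - a)\<^sup>2 + (Im x - b)\<^sup>2))"
    using smooth_real_has_real_derivative[OF assms] by (simp add: has_field_derivative_def)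
  from diff_chain_at[OF has_derivative_dist_square this] show ?thesis
    by (simp add: o_def)
qed

lemma plane_smooth_closure_has_derivative:
  "f \<in> plane_smooth_closure \<Longrightarrow>
    \<exists>D. (\<forall>x. (f has_derivative D x) (at x)) \<and> (\<forall>v. (\<lambda>x. D x v) \<in> plane_smooth_closure)"
proof (induction rule: plane_smooth_closure.induct)
  case (const c)
  show ?case
    by (rule exI[of _ "\<lambda>x h. 0"]) (auto intro: plane_smooth_closure.intros)
next
  case re
  show ?case
    by (rule exI[of _ "\<lambda>x h. Re h"])
      (auto intro: plane_smooth_closure.intros bounded_linear.has_derivative[OF bounded_linear_Re])
next
  case im
  show ?case
    by (rule exI[of _ "\<lambda>x h. Im h"])
      (auto intro: plane_smooth_closure.intros bounded_linear.has_derivative[OF bounded_linear_Im])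
next
  case (radial F a b)
  show ?case
  proof (intro exI conjI allI)
    show "((\<lambda>w. F ((Re w - a)\<^sup>2 + (Im w - b)\<^sup>2)) has_derivative
      (\<lambda>h. deriv F ((Re x - a)\<^sup>2 + (Im x - b)\<^sup>2) * (2 * (Re x - a) * Re h + 2 * (Im x - b) * Im h))) (at x)"
      for x
      by (rule has_derivative_radial[OF radial])
    show "(\<lambda>x. deriv F ((Re x - a)\<^sup>2 + (Im x - b)\<^sup>2) * (2 * (Re x - a) * Re v + 2 * (Im x - b) * Im v))
      \<in> plane_smooth_closure" for v
      by (intro plane_smooth_closure.intros smooth_real_deriv radial)
  qed
next
  case (add f g)
  then obtain D E where "\<forall>x. (f has_derivative D x) (at x)" "\<forall>v. (\<lambda>x. D x v) \<in> plane_smooth_closure"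
    and "\<forall>x. (g has_derivative E x) (at x)" "\<forall>v. (\<lambda>x. E x v) \<in> plane_smooth_closure"
    by blast
  then show ?case
    by (intro exI[of _ "\<lambda>x h. D x h + E x h"])
      (auto intro!: derivative_eq_intros plane_smooth_closure.intros)
next
  case (diff f g)
  then obtain D E where "\<forall>x. (f has_derivative D x) (at x)" "\<forall>v. (\<lambda>x. D x v) \<in> plane_smooth_closure"
    and "\<forall>x. (g has_derivative E x) (at x)" "\<forall>v. (\<lambda>x. E x v) \<in> plane_smooth_closure"
    by blast
  then show ?case
    by (intro exI[of _ "\<lambda>x h. D x h - E x h"])
      (auto intro!: derivative_eq_intros plane_smooth_closure.intros)
next
  case (mult f g)
  then obtain D E where "\<forall>x. (f has_derivative D x) (at x)" "\<forall>v. (\<lambda>x. D x v) \<in> plane_smooth_closure"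
    and "\<forall>x. (g has_derivative E x) (at x)" "\<forall>v. (\<lambda>x. E x v) \<in> plane_smooth_closure"
    by blast
  with mult.hyps show ?case
    by (intro exI[of _ "\<lambda>x h. f x * E x h + D x h * g x"])
      (auto intro!: derivative_eq_intros plane_smooth_closure.intros)
qed

lemma plane_smooth_closure_dpart:
  assumes "f \<in> plane_smooth_closure"
  shows "\<forall>x. f differentiable (at x)" and "dpart v f \<in> plane_smooth_closure"
proof -
  obtain D where D: "\<forall>x. (f has_derivative D x) (at x)" "\<forall>v. (\<lambda>x. D x v) \<in> plane_smooth_closure"
    using plane_smooth_closure_has_derivative[OF assms] by blast
  show "\<forall>x. f differentiable (at x)"
    using D(1) differentiable_def by blast
  have "dpart v f = (\<lambda>x. D x v)"
    unfolding dpart_def using D(1) frechet_derivative_at by metis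
  then show "dpart v f \<in> plane_smooth_closure"
    using D(2) by simp
qed

lemma plane_smooth_closure_imp_smooth_fun:
  assumes "f \<in> plane_smooth_closure"
  shows "smooth_fun f"
proof -
  have "foldr dpart vs f \<in> plane_smooth_closure" for vs
    by (induction vs) (auto simp: assms plane_smooth_closure_dpart)
  then show ?thesis
    unfolding smooth_fun_def using plane_smooth_closure_dpart(1) by blast
qed

lemma dpart_radial:
  assumes "smooth_real F"
  shows "dpart v (\<lambda>w. F ((Re w - a)\<^sup>2 + (Im w - b)\<^sup>2)) =
    (\<lambda>x. deriv F ((Re x - a)\<^sup>2 + (Im x - b)\<^sup>2) * (2 * (Re x - a) * Re v + 2 * (Im x - b) * Im v))"
  unfolding dpart_def
  by (rule ext) (simp only: frechet_derivative_at[OF has_derivative_radial[OF assms], symmetric])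

lemma dpart_radial_mult_linear:
  assumes "smooth_real G"
  shows "dpart v (\<lambda>x. G ((Re x - a)\<^sup>2 + (Im x - b)\<^sup>2) * (2 * (Re x - a) * c + 2 * (Im x - b) * d)) =
    (\<lambda>x. deriv G ((Re x - a)\<^sup>2 + (Im x - b)\<^sup>2) * (2 * (Re x - a) * Re v + 2 * (Im x - b) * Im v)
         * (2 * (Re x - a) * c + 2 * (Im x - b) * d)
       + G ((Re x - a)\<^sup>2 + (Im x - b)\<^sup>2) * (2 * Re v * c + 2 * Im v * d))"
proof -
  have hd: "((\<lambda>x. G ((Re x - a)\<^sup>2 + (Im x - b)\<^sup>2) * (2 * (Re x - a) * c + 2 * (Im x - b) * d)) has_derivative
    (\<lambda>v. deriv G ((Re x - a)\<^sup>2 + (Im x - b)\<^sup>2) * (2 * (Re x - a) * Re v + 2 * (Im x - b) * Im v)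
         * (2 * (Re x - a) * c + 2 * (Im x - b) * d)
       + G ((Re x - a)\<^sup>2 + (Im x - b)\<^sup>2) * (2 * Re v * c + 2 * Im v * d))) (at x)" for x
    by (rule has_derivative_eq_rhs, rule has_derivative_mult[OF has_derivative_radial[OF assms]])
      (auto intro!: derivative_eq_intros simp: algebra_simps)
  show ?thesis
    unfolding dpart_def by (intro ext) (simp only: frechet_derivative_at[OF hd, symmetric])
qed

lemma laplacian_radial:
  assumes "smooth_real F"
  shows "laplacian (\<lambda>w. F ((Re w - a)\<^sup>2 + (Im w - b)\<^sup>2)) x =
    4 * (deriv F ((Re x - a)\<^sup>2 + (Im x - b)\<^sup>2)
      + ((Re x - a)\<^sup>2 + (Im x - b)\<^sup>2) * deriv (deriv F) ((Re x - a)\<^sup>2 + (Im x - b)\<^sup>2))"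
proof -
  have re: "dpart 1 (\<lambda>w. F ((Re w - a)\<^sup>2 + (Im w - b)\<^sup>2)) =
      (\<lambda>x. deriv F ((Re x - a)\<^sup>2 + (Im x - b)\<^sup>2) * (2 * (Re x - a) * 1 + 2 * (Im x - b) * 0))"
    and im: "dpart \<i> (\<lambda>w. F ((Re w - a)\<^sup>2 + (Im w - b)\<^sup>2)) =
      (\<lambda>x. deriv F ((Re x - a)\<^sup>2 + (Im x - b)\<^sup>2) * (2 * (Re x - a) * 0 + 2 * (Im x - b) * 1))"
    using dpart_radial[OF assms, of 1] dpart_radial[OF assms, of \<i>] by simp_all
  show ?thesis
    unfolding laplacian_def re im dpart_radial_mult_linear[OF smooth_real_deriv[OF assms]]
    by (simp add: algebra_simps power2_eq_square)
qed

section \<open>Radial kernels and the logarithmic test function\<close>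

lemma emeasure_ball_complex: "r \<ge> 0 \<Longrightarrow> emeasure lborel (ball (c :: complex) r) = ennreal (pi * r\<^sup>2)"
  using emeasure_ball[of r c] unit_ball_vol_even[of 1] by simp

lemma distr_lborel_neg_norm_square:
  "distr (lborel :: complex measure) borel (\<lambda>u. - (cmod u)\<^sup>2)
    = density lborel (\<lambda>s. ennreal pi * indicator {..0} s)"
  (is "?M1 = ?M2")
proof (rule measure_eqI_lessThan)
  show "sets ?M1 = sets borel" "sets ?M2 = sets borel"
    by auto
  have M1: "emeasure ?M1 {x<..} = ennreal (pi * max 0 (- x))" for x
  proof -
    have "emeasure ?M1 {x<..} = emeasure lborel ((\<lambda>u::complex. - (cmod u)\<^sup>2) -` {x<..})"
      by (subst emeasure_distr) auto
    also have "\<dots> = ennreal (pi * max 0 (- x))"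
    proof (cases "x < 0")
      case True
      have "cmod u < sqrt (- x) \<longleftrightarrow> (cmod u)\<^sup>2 < - x" for u :: complex
        using real_sqrt_less_iff[of "(cmod u)\<^sup>2" "- x"] by simp
      then have "(\<lambda>u::complex. - (cmod u)\<^sup>2) -` {x<..} = ball 0 (sqrt (- x))"
        by (auto simp: dist_norm)
      then show ?thesis
        using True emeasure_ball_complex[of "sqrt (- x)" 0] by simp
    next
      case False
      then have "(\<lambda>u::complex. - (cmod u)\<^sup>2) -` {x<..} = {}"
        by (auto simp: not_less) (smt (verit) zero_le_power2)
      then show ?thesis
        using False by simp
    qed
    finally show ?thesis .
  qed
  have M2: "emeasure ?M2 {x<..} = ennreal (pi * max 0 (- x))" for x
  proof -
    have "emeasure ?M2 {x<..} = (\<integral>\<^sup>+ s. ennreal pi * indicator {..0} s * indicator {x<..} s \<partial>lborel)"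
      by (subst emeasure_density) auto
    also have "\<dots> = (\<integral>\<^sup>+ s. ennreal pi * indicator {x<..0} s \<partial>lborel)"
      by (intro nn_integral_cong) (auto split: split_indicator)
    also have "\<dots> = ennreal pi * emeasure lborel {x<..0}"
      by (subst nn_integral_cmult_indicator) auto
    also have "\<dots> = ennreal (pi * max 0 (- x))"
      by (cases "x < 0") (auto simp: ennreal_mult[symmetric])
    finally show ?thesis .
  qed
  show "emeasure ?M1 {x<..} < \<infinity>" for x
    using M1 by simp
  show "emeasure ?M1 {x<..} = emeasure ?M2 {x<..}" for x
    using M1 M2 by simp
qed

lemma nn_integral_radial:
  fixes f :: "real \<Rightarrow> ennreal"
  assumes [measurable]: "f \<in> borel_measurable borel"
  shows "(\<integral>\<^sup>+ u. f ((cmod (u :: complex))\<^sup>2) \<partial>lborel)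
    = ennreal pi * (\<integral>\<^sup>+ s. f s * indicator {0..} s \<partial>lborel)"
proof -
  have "(\<integral>\<^sup>+ u. f ((cmod (u :: complex))\<^sup>2) \<partial>lborel)
      = (\<integral>\<^sup>+ s. f (- s) \<partial>distr (lborel :: complex measure) borel (\<lambda>u. - (cmod u)\<^sup>2))"
    by (subst nn_integral_distr) auto
  also have "\<dots> = (\<integral>\<^sup>+ s. ennreal pi * (indicator {..0} s * f (- s)) \<partial>lborel)"
    unfolding distr_lborel_neg_norm_square by (subst nn_integral_density) (auto simp: mult_ac)
  also have "\<dots> = ennreal pi * (\<integral>\<^sup>+ s. indicator {..0} s * f (- s) \<partial>lborel)"
    by (subst nn_integral_cmult) auto
  also have "(\<integral>\<^sup>+ s. indicator {..0} s * f (- s) \<partial>lborel)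
      = (\<integral>\<^sup>+ s. f s * indicator {0..} s \<partial>distr lborel borel uminus)"
    by (subst nn_integral_distr) (auto intro!: nn_integral_cong simp: mult.commute split: split_indicator)
  also have "\<dots> = (\<integral>\<^sup>+ s. f s * indicator {0..} s \<partial>lborel)"
    by (simp only: lborel_distr_uminus)
  finally show ?thesis .
qed

definition step_kernel :: "real \<Rightarrow> complex \<Rightarrow> complex \<Rightarrow> real" where
  "step_kernel \<rho> z w = deriv smooth_step ((cmod (w - z))\<^sup>2 / \<rho>\<^sup>2) / \<rho>\<^sup>2"

lemma step_kernel_nonneg: "step_kernel \<rho> z w \<ge> 0"
  by (simp add: step_kernel_def deriv_smooth_step_nonneg)

lemma step_kernel_eq_0:
  assumes "\<rho> > 0" and "w \<notin> ball z \<rho>"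
  shows "step_kernel \<rho> z w = 0"
proof -
  have "\<rho>\<^sup>2 \<le> (cmod (w - z))\<^sup>2"
    using assms by (intro power_mono) (auto simp: dist_norm norm_minus_commute)
  then show ?thesis
    using assms(1) by (simp add: step_kernel_def deriv_smooth_step_eq_0)
qed

lemma continuous_on_step_kernel: "continuous_on S (step_kernel \<rho> z)"
proof (cases "\<rho> = 0")
  case True
  then show ?thesis
    by (simp add: step_kernel_def[abs_def])
next
  case False
  then show ?thesis
    unfolding step_kernel_def
    by (intro continuous_intros
        continuous_on_compose2[OF smooth_real_continuous_on_deriv[OF smooth_real_smooth_step]]) auto
qed

lemma borel_measurable_step_kernel [measurable]: "step_kernel \<rho> z \<in> borel_measurable borel"
  by (rule borel_measurable_continuous_onI[OF continuous_on_step_kernel])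

lemma step_kernel_bounded: "\<exists>B. \<forall>\<rho> z w. \<bar>step_kernel \<rho> z w\<bar> \<le> B / \<rho>\<^sup>2"
proof -
  obtain B where "\<forall>x. \<bar>deriv smooth_step x\<bar> \<le> B"
    using deriv_smooth_step_bounded by blast
  then have "\<bar>step_kernel \<rho> z w\<bar> \<le> B / \<rho>\<^sup>2" for \<rho> z w
    by (simp add: step_kernel_def divide_right_mono)
  then show ?thesis
    by blast
qed

lemma nn_integral_step_kernel:
  assumes "\<rho> > 0"
  shows "(\<integral>\<^sup>+ w. ennreal (step_kernel \<rho> z w) \<partial>lborel) = ennreal pi"
proof -
  define e where "e = \<rho>\<^sup>2"
  have e: "e > 0"
    using assms by (simp add: e_def)
  define g where "g s = ennreal (deriv smooth_step (s / e) / e)" for s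
  have cont: "continuous_on UNIV (\<lambda>s. deriv smooth_step (s / e) / e)"
    using e by (intro continuous_intros
        continuous_on_compose2[OF smooth_real_continuous_on_deriv[OF smooth_real_smooth_step]]) auto
  then have [measurable]: "g \<in> borel_measurable borel"
    unfolding g_def by (intro measurable_compose[OF _ measurable_ennreal] borel_measurable_continuous_onI)
  have "(\<integral>\<^sup>+ w. ennreal (step_kernel \<rho> z w) \<partial>lborel) = (\<integral>\<^sup>+ w. g ((cmod (w - z))\<^sup>2) \<partial>lborel)"
    by (simp add: step_kernel_def g_def e_def)
  also have "\<dots> = (\<integral>\<^sup>+ w. g ((cmod (w - z))\<^sup>2) \<partial>distr lborel borel ((+) z))"
    by (simp only: lborel_distr_plus)
  also have "\<dots> = (\<integral>\<^sup>+ u. g ((cmod u)\<^sup>2) \<partial>lborel)"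
    by (subst nn_integral_distr) auto
  also have "\<dots> = ennreal pi * (\<integral>\<^sup>+ s. g s * indicator {0..} s \<partial>lborel)"
    by (rule nn_integral_radial) measurable
  also have "(\<integral>\<^sup>+ s. g s * indicator {0..} s \<partial>lborel)
      = (\<integral>\<^sup>+ s. ennreal (deriv smooth_step (s / e) / e) * indicator {0..e} s \<partial>lborel)"
    using e by (intro nn_integral_cong) (auto simp: g_def deriv_smooth_step_eq_0 split: split_indicator)
  also have "\<dots> = ennreal (smooth_step (e / e) - smooth_step (0 / e))"
  proof (rule nn_integral_FTC_Icc)
    fix x
    have "((\<lambda>s. s / e) has_real_derivative 1 / e) (at x)"
      using e by (auto intro!: derivative_eq_intros)
    from DERIV_chain2[OF smooth_real_has_real_derivative[OF smooth_real_smooth_step] this]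
    show "((\<lambda>s. smooth_step (s / e)) has_real_derivative deriv smooth_step (x / e) / e) (at x)"
      by simp
    show "0 \<le> deriv smooth_step (x / e) / e"
      using e deriv_smooth_step_nonneg by simp
  qed (use e cont borel_measurable_continuous_onI in auto)
  also have "smooth_step (e / e) - smooth_step (0 / e) = 1"
    using e smooth_step_eq_0 smooth_step_eq_1 by simp
  finally show ?thesis
    by simp
qed

lemma has_bochner_integral_step_kernel:
  assumes "\<rho> > 0"
  shows "has_bochner_integral lborel (step_kernel \<rho> z) pi"
proof -
  have "integrable lborel (step_kernel \<rho> z)"
    using nn_integral_step_kernel[OF assms] step_kernel_nonneg
    by (intro integrableI_nn_integral_finite) auto
  moreover have "integral\<^sup>L lborel (step_kernel \<rho> z) = pi"
    using nn_integral_eq_integral[OF calculation] nn_integral_step_kernel[OF assms] step_kernel_nonneg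
    by (simp add: integral_nonneg_AE)
  ultimately show ?thesis
    by (simp add: has_bochner_integral_iff)
qed

definition log_kernel :: "complex \<Rightarrow> real \<Rightarrow> complex \<Rightarrow> ennreal" where
  "log_kernel z R w = (if w = z then \<infinity> else ennreal (max 0 (ln R - ln (cmod (w - z)))))"

lemma borel_measurable_log_kernel [measurable]: "log_kernel z R \<in> borel_measurable borel"
  unfolding log_kernel_def[abs_def] by measurable

definition log_test_fun :: "real \<Rightarrow> real \<Rightarrow> complex \<Rightarrow> complex \<Rightarrow> real" where
  "log_test_fun \<epsilon> R z w = log_cutoff (\<epsilon>\<^sup>2) (R\<^sup>2) ((cmod (w - z))\<^sup>2)"

context
  fixes \<epsilon> R :: real
  assumes \<epsilon>: "0 < \<epsilon>" and \<epsilon>R: "\<epsilon> \<le> R"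
begin

lemma log_test_fun_radial:
  "log_test_fun \<epsilon> R z = (\<lambda>w. log_cutoff (\<epsilon>\<^sup>2) (R\<^sup>2) ((Re w - Re z)\<^sup>2 + (Im w - Im z)\<^sup>2))"
  by (simp add: log_test_fun_def[abs_def] cmod_power2)

lemma test_fun_log_test_fun:
  assumes "cball z R \<subseteq> U"
  shows "test_fun U (log_test_fun \<epsilon> R z)"
proof -
  have e2: "0 < \<epsilon>\<^sup>2" "\<epsilon>\<^sup>2 \<le> R\<^sup>2"
    using \<epsilon> \<epsilon>R by (auto intro: power_mono)
  have "{w. log_test_fun \<epsilon> R z w \<noteq> 0} \<subseteq> ball z R"
  proof
    fix w
    assume "w \<in> {w. log_test_fun \<epsilon> R z w \<noteq> 0}"
    then have "\<not> R\<^sup>2 \<le> (cmod (w - z))\<^sup>2"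
      using log_cutoff_eq_0[OF e2] by (auto simp: log_test_fun_def)
    then show "w \<in> ball z R"
      using \<epsilon> \<epsilon>R by (simp add: dist_norm norm_minus_commute power_less_imp_less_base not_le)
  qed
  then have "tsupport (log_test_fun \<epsilon> R z) \<subseteq> cball z R"
    unfolding tsupport_def by (intro closure_minimal) auto
  moreover from this have "compact (tsupport (log_test_fun \<epsilon> R z))"
    by (simp add: compact_eq_bounded_closed bounded_subset[OF bounded_cball] tsupport_def)
  moreover have "smooth_fun (log_test_fun \<epsilon> R z)"
    unfolding log_test_fun_radial
    by (intro plane_smooth_closure_imp_smooth_fun plane_smooth_closure.radial smooth_real_log_cutoff e2)
  ultimately show ?thesis
    using assms by (auto simp: test_fun_def)
qed

lemma laplacian_log_test_fun:
  "laplacian (log_test_fun \<epsilon> R z) w = 4 * (step_kernel R z w - step_kernel \<epsilon> z w)"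
proof -
  have "\<epsilon>\<^sup>2 \<le> R\<^sup>2"
    using \<epsilon> \<epsilon>R by (intro power_mono) auto
  with \<epsilon> show ?thesis
    unfolding log_test_fun_radial
    by (simp add: laplacian_radial smooth_real_log_cutoff log_cutoff_radial_laplacian cmod_power2
        step_kernel_def)
qed

lemma log_test_fun_nonneg: "log_test_fun \<epsilon> R z w \<ge> 0"
  using \<epsilon> \<epsilon>R by (simp add: log_test_fun_def log_cutoff_nonneg power_mono)

lemma log_test_fun_le_log_kernel: "ennreal (log_test_fun \<epsilon> R z w / 2) \<le> log_kernel z R w"
proof (cases "w = z \<or> R\<^sup>2 \<le> (cmod (w - z))\<^sup>2")
  case True
  then show ?thesis
    using \<epsilon> \<epsilon>R by (auto simp: log_kernel_def log_test_fun_def log_cutoff_eq_0 power_mono)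
next
  case False
  then have pos: "cmod (w - z) > 0"
    by simp
  have "log_test_fun \<epsilon> R z w \<le> ln (R\<^sup>2) - ln ((cmod (w - z))\<^sup>2)"
    unfolding log_test_fun_def using False pos \<epsilon> \<epsilon>R by (intro log_cutoff_le_ln power_mono) auto
  also have "\<dots> = 2 * (ln R - ln (cmod (w - z)))"
    using \<epsilon> \<epsilon>R pos by (simp add: ln_realpow)
  also have "\<dots> \<le> 2 * max 0 (ln R - ln (cmod (w - z)))"
    by (intro mult_left_mono max.cobounded2) simp
  finally show ?thesis
    using False by (simp add: log_kernel_def ennreal_leI)
qed

end

section \<open>Jensen's inequality and the power kernel\<close>

definition ennexp :: "ennreal \<Rightarrow> ennreal" where
  "ennexp x = (if x = \<infinity> then \<infinity> else ennreal (exp (enn2real x)))"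

lemma le_ennexp: "x \<le> ennexp x"
proof (cases "x = \<infinity>")
  case False
  then obtain r where r: "x = ennreal r" "r \<ge> 0" by (cases x) auto
  have "r \<le> exp r" using exp_ge_add_one_self[of r] by linarith
  then show ?thesis using r by (simp add: ennexp_def ennreal_leI)
qed (simp add: ennexp_def)

lemma borel_measurable_ennexp[measurable]: "ennexp \<in> borel_measurable borel"
  unfolding ennexp_def[abs_def] by measurable

lemma ennexp_tangent_line:
  assumes "a \<ge> 0"
  shows "ennreal (exp a) * (1 + x) \<le> ennexp x + ennreal (exp a * a)"
proof (cases "x = \<infinity>")
  case True
  then show ?thesis
    by (simp add: ennexp_def)
next
  case False
  then obtain y where y: "x = ennreal y" "y \<ge> 0"
    by (cases x) auto
  have "exp a * (1 + (y - a)) \<le> exp a * exp (y - a)"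
    using exp_ge_add_one_self[of "y - a"] by (intro mult_left_mono) auto
  then have "exp a * (1 + y) \<le> exp y + exp a * a"
    by (simp add: algebra_simps exp_diff)
  then have "ennreal (exp a * (1 + y)) \<le> ennreal (exp y + exp a * a)"
    by (rule ennreal_leI)
  then show ?thesis
    using y assms by (simp add: ennexp_def ennreal_mult ennreal_plus)
qed

lemma ennexp_nn_integral_average_le:
  assumes fin: "emeasure Q (space Q) = ennreal M" and M: "M > 0"
    and f[measurable]: "f \<in> borel_measurable Q"
  shows "ennexp ((\<integral>\<^sup>+x. f x \<partial>Q) / ennreal M) \<le> (\<integral>\<^sup>+x. ennexp (f x) \<partial>Q) / ennreal M"
proof (cases "(\<integral>\<^sup>+x. f x \<partial>Q) = \<infinity>")
  case True
  have "(\<integral>\<^sup>+x. f x \<partial>Q) \<le> (\<integral>\<^sup>+x. ennexp (f x) \<partial>Q)"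
    by (intro nn_integral_mono le_ennexp)
  with True M show ?thesis
    by (simp add: ennexp_def ennreal_top_divide top_unique)
next
  case False
  then obtain I where I: "(\<integral>\<^sup>+x. f x \<partial>Q) = ennreal I" "I \<ge> 0"
    by (cases "(\<integral>\<^sup>+x. f x \<partial>Q)") auto
  define a where "a = I / M"
  have a: "a \<ge> 0"
    using I M by (simp add: a_def)
  have "ennreal (exp a * M) + ennreal (exp a * a) * ennreal M = ennreal (exp a) * (ennreal M + ennreal I)"
    using M I a
    by (simp add: a_def ennreal_mult[symmetric] ennreal_plus[symmetric] algebra_simps del: ennreal_plus)
  also have "\<dots> = (\<integral>\<^sup>+x. ennreal (exp a) * (1 + f x) \<partial>Q)"
    using fin I by (simp add: nn_integral_cmult nn_integral_add)
  also have "\<dots> \<le> (\<integral>\<^sup>+x. ennexp (f x) + ennreal (exp a * a) \<partial>Q)"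
    by (intro nn_integral_mono ennexp_tangent_line a)
  also have "\<dots> = (\<integral>\<^sup>+x. ennexp (f x) \<partial>Q) + ennreal (exp a * a) * ennreal M"
    using fin by (simp add: nn_integral_add nn_integral_const)
  finally have "ennreal (exp a * M) \<le> (\<integral>\<^sup>+x. ennexp (f x) \<partial>Q)"
    by (simp add: ennreal_mult_eq_top_iff)
  have "ennexp ((\<integral>\<^sup>+x. f x \<partial>Q) / ennreal M) = ennreal (exp a * M) / ennreal M"
    using I M a by (simp add: ennexp_def a_def divide_ennreal)
  also have "\<dots> \<le> (\<integral>\<^sup>+x. ennexp (f x) \<partial>Q) / ennreal M"
    by (intro divide_right_mono_ennreal) fact
  finally show ?thesis .
qed

definition inv_powr :: "real \<Rightarrow> real \<Rightarrow> ennreal" where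
  "inv_powr m \<rho> = (if \<rho> = 0 then \<infinity> else ennreal (\<rho> powr (- m)))"

lemma borel_measurable_inv_powr [measurable]: "inv_powr m \<in> borel_measurable borel"
  unfolding inv_powr_def[abs_def] by measurable

lemma inv_powr_le_1:
  assumes "\<rho> \<ge> 1" and "m \<ge> 0"
  shows "inv_powr m \<rho> \<le> 1"
proof -
  have "1 \<le> \<rho> powr m"
    using assms by (intro ge_one_powr_ge_zero) auto
  then have "\<rho> powr (- m) \<le> 1"
    using assms by (simp add: powr_minus divide_simps)
  then show ?thesis
    using assms by (simp add: inv_powr_def ennreal_leI)
qed

lemma inv_powr_antimono:
  assumes "0 \<le> \<rho>" and "\<rho> \<le> \<rho>'" and "m \<ge> 0"
  shows "inv_powr m \<rho>' \<le> inv_powr m \<rho>"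
proof (cases "\<rho> = 0")
  case True
  then show ?thesis
    by (simp add: inv_powr_def)
next
  case False
  with assms have "\<rho> > 0" "\<rho>' > 0" "\<rho>' powr (- m) \<le> \<rho> powr (- m)"
    by (auto intro: powr_mono2')
  then show ?thesis
    by (simp add: inv_powr_def ennreal_leI)
qed

lemma ennexp_log_kernel_le:
  assumes m: "m > 0" and R: "R > 0"
  shows "ennexp (ennreal m * log_kernel z R w) \<le> 1 + ennreal (R powr m) * inv_powr m (cmod (w - z))"
proof (cases "w = z")
  case True
  then show ?thesis
    using R m by (simp add: ennexp_def inv_powr_def log_kernel_def ennreal_mult_top)
next
  case False
  define \<rho> where "\<rho> = cmod (w - z)"
  have \<rho>: "\<rho> > 0"
    using False by (simp add: \<rho>_def)
  have "exp (m * max 0 (ln R - ln \<rho>)) \<le> 1 + exp (m * (ln R - ln \<rho>))"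
    by (cases "0 \<le> ln R - ln \<rho>") (auto simp: max_def)
  also have "exp (m * (ln R - ln \<rho>)) = R powr m * \<rho> powr (- m)"
    using R \<rho> by (simp add: powr_def exp_diff exp_minus algebra_simps exp_add[symmetric] divide_inverse)
  finally have *: "exp (m * max 0 (ln R - ln \<rho>)) \<le> 1 + R powr m * \<rho> powr (- m)" .
  have "ennexp (ennreal m * log_kernel z R w) = ennreal (exp (m * max 0 (ln R - ln \<rho>)))"
    using False m by (simp add: \<rho>_def log_kernel_def ennexp_def ennreal_mult[symmetric])
  also have "\<dots> \<le> ennreal (1 + R powr m * \<rho> powr (- m))"
    using * by (rule ennreal_leI)
  also have "\<dots> = 1 + ennreal (R powr m) * inv_powr m (cmod (w - z))"
    using \<rho> by (simp add: \<rho>_def inv_powr_def ennreal_mult ennreal_plus)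
  finally show ?thesis .
qed

lemma nn_integral_inv_powr_unit_interval:
  assumes m: "0 \<le> m" "m < 1"
  shows "(\<integral>\<^sup>+s. inv_powr m s * indicator {0..1} s \<partial>lborel) = ennreal (1 / (1 - m))"
proof -
  have "AE s in lborel. inv_powr m s * indicator {0..1} s = ennreal (indicator {0..1} s * s powr (- m))"
    using AE_lborel_singleton[of 0] by eventually_elim (auto simp: inv_powr_def indicator_def)
  then have "(\<integral>\<^sup>+s. inv_powr m s * indicator {0..1} s \<partial>lborel)
      = (\<integral>\<^sup>+s. ennreal (indicator {0..1} s * s powr (- m)) \<partial>lborel)"
    by (rule nn_integral_cong_AE)
  also have "\<dots> = ennreal (1 powr (- m + 1) / (- m + 1))"
    by (rule nn_integral_has_integral_lebesgue) (use has_integral_powr_from_0[of "- m" 1] m in auto)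
  finally show ?thesis
    by simp
qed

lemma nn_integral_inv_powr_interval:
  assumes m: "0 \<le> m" "m < 1"
  shows "(\<integral>\<^sup>+t. inv_powr m \<bar>x - t\<bar> * indicator {a..b} t \<partial>lborel) \<le> ennreal (2 / (1 - m) + \<bar>b - a\<bar>)"
proof -
  define g where "g s = inv_powr m s * indicator {0..1} s" for s
  have [measurable]: "g \<in> borel_measurable borel"
    unfolding g_def[abs_def] by measurable
  have "inv_powr m \<bar>x - t\<bar> * indicator {a..b} t \<le> g (t - x) + g (x - t) + indicator {a..b} t" for t
  proof (cases "\<bar>x - t\<bar> \<le> 1")
    case True
    then show ?thesis
      unfolding g_def
      by (cases "t \<ge> x") (auto simp: indicator_def abs_if add.commute add_increasing2 split: if_splits)
  next
    case False
    then have "inv_powr m \<bar>x - t\<bar> \<le> 1"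
      using m by (intro inv_powr_le_1) auto
    then have "inv_powr m \<bar>x - t\<bar> * indicator {a..b} t \<le> indicator {a..b} t"
      by (auto simp: indicator_def)
    then show ?thesis
      by (simp add: add_increasing)
  qed
  then have "(\<integral>\<^sup>+t. inv_powr m \<bar>x - t\<bar> * indicator {a..b} t \<partial>lborel)
      \<le> (\<integral>\<^sup>+t. g (t - x) + g (x - t) + indicator {a..b} t \<partial>lborel)"
    by (rule nn_integral_mono)
  also have "\<dots> = (\<integral>\<^sup>+t. g (t - x) \<partial>lborel) + (\<integral>\<^sup>+t. g (x - t) \<partial>lborel) + emeasure lborel {a..b}"
    by (simp add: nn_integral_add)
  also have "(\<integral>\<^sup>+t. g (t - x) \<partial>lborel) = (\<integral>\<^sup>+t. g t \<partial>lborel)"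
    using nn_integral_real_affine[of g 1 "- x"] by simp
  also have "(\<integral>\<^sup>+t. g (x - t) \<partial>lborel) = (\<integral>\<^sup>+t. g t \<partial>lborel)"
    using nn_integral_real_affine[of g "- 1" x] by simp
  also have "(\<integral>\<^sup>+t. g t \<partial>lborel) = ennreal (1 / (1 - m))"
    unfolding g_def by (rule nn_integral_inv_powr_unit_interval[OF m])
  also have "emeasure lborel {a..b} \<le> ennreal \<bar>b - a\<bar>"
    by (cases "a \<le> b") auto
  finally show ?thesis
    using m by (simp add: ennreal_plus[symmetric] del: ennreal_plus)
qed

lemma ennreal_add_mult_divide:
  assumes "M > 0"
  shows "(ennreal M + ennreal c * x) / ennreal M = 1 + ennreal (c / M) * x"
proof -
  have inv: "inverse (ennreal M) = ennreal (inverse M)"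
    using assms by (simp add: inverse_ennreal)
  have "(ennreal M + ennreal c * x) / ennreal M
      = ennreal M * ennreal (inverse M) + ennreal c * ennreal (inverse M) * x"
    unfolding divide_ennreal_def inv by (simp add: distrib_right distrib_left mult_ac)
  also have "ennreal M * ennreal (inverse M) = 1"
    using assms by (simp add: ennreal_mult[symmetric])
  also have "ennreal c * ennreal (inverse M) = ennreal (c / M)"
    using assms by (simp add: ennreal_mult''[symmetric] divide_inverse)
  finally show ?thesis .
qed

lemma ennexp_potential_le:
  assumes sets: "sets \<nu> = sets borel" and M: "emeasure \<nu> (space \<nu>) = ennreal M" "M \<ge> 0"
    and R: "R > 0"
  defines "m \<equiv> M / (2 * pi)"
  shows "ennexp (ennreal (1 / (2 * pi)) * (\<integral>\<^sup>+w. log_kernel z R w \<partial>\<nu>))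
     \<le> 1 + ennreal (R powr m / M) * (\<integral>\<^sup>+w. inv_powr m (cmod (w - z)) \<partial>\<nu>)"
proof (cases "M = 0")
  case True
  have "(\<integral>\<^sup>+w. log_kernel z R w \<partial>\<nu>) \<le> (\<integral>\<^sup>+w. \<infinity> \<partial>\<nu>)"
    by (intro nn_integral_mono) simp
  also have "\<dots> = 0"
    using M True by simp
  finally show ?thesis
    by (simp add: ennexp_def)
next
  case False
  with M have M: "emeasure \<nu> (space \<nu>) = ennreal M" "M > 0"
    by auto
  then have m: "m > 0"
    by (simp add: m_def)
  note measurable_\<nu> = measurable_cong_sets[OF sets refl]
  have [measurable]: "log_kernel z R \<in> borel_measurable \<nu>"
    "(\<lambda>w. inv_powr m (cmod (w - z))) \<in> borel_measurable \<nu>"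
    unfolding measurable_\<nu> by measurable
  have "ennreal (1 / (2 * pi)) = ennreal m * ennreal (inverse M)"
    using M by (simp add: m_def ennreal_mult[symmetric])
  then have "ennreal (1 / (2 * pi)) * (\<integral>\<^sup>+w. log_kernel z R w \<partial>\<nu>)
      = (\<integral>\<^sup>+w. ennreal m * log_kernel z R w \<partial>\<nu>) / ennreal M"
    using M by (simp add: nn_integral_cmult divide_ennreal_def inverse_ennreal mult_ac)
  also have "ennexp \<dots> \<le> (\<integral>\<^sup>+w. ennexp (ennreal m * log_kernel z R w) \<partial>\<nu>) / ennreal M"
    using M by (intro ennexp_nn_integral_average_le) auto
  also have "\<dots> \<le> (\<integral>\<^sup>+w. 1 + ennreal (R powr m) * inv_powr m (cmod (w - z)) \<partial>\<nu>) / ennreal M"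
    by (intro divide_right_mono_ennreal nn_integral_mono ennexp_log_kernel_le m R)
  also have "\<dots> = (ennreal M + ennreal (R powr m) * (\<integral>\<^sup>+w. inv_powr m (cmod (w - z)) \<partial>\<nu>)) / ennreal M"
    using M by (simp add: nn_integral_add nn_integral_cmult)
  also have "\<dots> = 1 + ennreal (R powr m / M) * (\<integral>\<^sup>+w. inv_powr m (cmod (w - z)) \<partial>\<nu>)"
    by (rule ennreal_add_mult_divide[OF M(2)])
  finally show ?thesis .
qed

section \<open>A lower bound for \<open>\<phi>\<close> by its potential\<close>

lemma integrable_mult_bounded:
  fixes f g :: "'a \<Rightarrow> real"
  assumes "integrable M f" and "g \<in> borel_measurable M" and "\<And>x. \<bar>g x\<bar> \<le> B"
  shows "integrable M (\<lambda>x. f x * g x)"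
proof (rule Bochner_Integration.integrable_bound)
  show "integrable M (\<lambda>x. B * f x)"
    using assms(1) by simp
  show "(\<lambda>x. f x * g x) \<in> borel_measurable M"
    using assms(1,2) by measurable
  have "\<bar>f x\<bar> * \<bar>g x\<bar> \<le> \<bar>f x\<bar> * \<bar>B\<bar>" for x
    using assms(3)[of x] by (intro mult_left_mono) auto
  then show "AE x in M. norm (f x * g x) \<le> norm (B * f x)"
    by (simp add: abs_mult mult.commute)
qed

lemma set_integrable_mult_step_kernel:
  fixes f :: "complex \<Rightarrow> real"
  assumes "set_integrable lborel K f" and "cball z \<rho> \<subseteq> K" and "\<rho> > 0"
  shows "integrable lborel (\<lambda>w. f w * step_kernel \<rho> z w)"
proof -
  obtain B where B: "\<And>w. \<bar>step_kernel \<rho> z w\<bar> \<le> B / \<rho>\<^sup>2"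
    using step_kernel_bounded by blast
  have "integrable lborel (\<lambda>w. indicator K w * f w * step_kernel \<rho> z w)"
    using assms(1) B unfolding set_integrable_def
    by (intro integrable_mult_bounded[where f = "\<lambda>w. indicator K w * f w"]) auto
  moreover have "indicator K w * f w * step_kernel \<rho> z w = f w * step_kernel \<rho> z w" for w
  proof (cases "w \<in> K")
    case False
    then have "w \<notin> ball z \<rho>"
      using assms(2) ball_subset_cball by blast
    then show ?thesis
      using step_kernel_eq_0[OF assms(3)] False by simp
  qed simp
  ultimately show ?thesis
    by simp
qed

lemma integral_mult_step_kernel_le:
  fixes f :: "complex \<Rightarrow> real"
  assumes "integrable lborel (\<lambda>w. f w * step_kernel \<rho> z w)" and "\<rho> > 0"
    and "AE w in lborel. w \<in> ball z \<rho> \<longrightarrow> f w \<le> c"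
  shows "(\<integral>w. f w * step_kernel \<rho> z w \<partial>lborel) \<le> c * pi"
proof -
  have "AE w in lborel. f w * step_kernel \<rho> z w \<le> c * step_kernel \<rho> z w"
    using assms(3)
  proof eventually_elim
    case (elim w)
    then show ?case
      using step_kernel_eq_0[OF assms(2), of w z] step_kernel_nonneg[of \<rho> z w]
      by (cases "w \<in> ball z \<rho>") (auto intro: mult_right_mono)
  qed
  moreover have "integrable lborel (step_kernel \<rho> z)"
    using has_bochner_integral_step_kernel[OF assms(2)] by (rule integrable.intros)
  ultimately have "(\<integral>w. f w * step_kernel \<rho> z w \<partial>lborel) \<le> (\<integral>w. c * step_kernel \<rho> z w \<partial>lborel)"
    using assms(1) by (intro integral_mono_AE) auto
  also have "\<dots> = c * pi"
    using has_bochner_integral_step_kernel[OF assms(2), THEN has_bochner_integral_integral_eq] by simp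
  finally show ?thesis .
qed

text \<open>A weighted mean of \<open>\<phi>\<close> over \<^term>\<open>ball z R\<close>: the weights \<^term>\<open>step_kernel R z\<close> have
  total mass \<open>\<pi>\<close>.\<close>

definition disc_mean :: "(complex \<Rightarrow> ereal) \<Rightarrow> complex \<Rightarrow> real \<Rightarrow> real" where
  "disc_mean \<phi> z R = (\<integral>w. real_of_ereal (\<phi> w) * step_kernel R z w \<partial>lborel) / pi"

lemma disc_mean_bounded:
  assumes "set_integrable lborel K (\<lambda>w. real_of_ereal (\<phi> w))" and "R > 0"
  shows "\<exists>C. \<forall>z. cball z R \<subseteq> K \<longrightarrow> \<bar>disc_mean \<phi> z R\<bar> \<le> C"
proof -
  define f where "f w = indicator K w * real_of_ereal (\<phi> w)" for w
  obtain B where B: "\<And>\<rho> z w. \<bar>step_kernel \<rho> z w\<bar> \<le> B / \<rho>\<^sup>2"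
    using step_kernel_bounded by blast
  have "\<bar>disc_mean \<phi> z R\<bar> \<le> B / R\<^sup>2 * (\<integral>w. \<bar>f w\<bar> \<partial>lborel) / pi" if "cball z R \<subseteq> K" for z
  proof -
    have eq: "f w * step_kernel R z w = real_of_ereal (\<phi> w) * step_kernel R z w" for w
    proof (cases "w \<in> K")
      case False
      then have "w \<notin> ball z R"
        using that ball_subset_cball by blast
      then show ?thesis
        using step_kernel_eq_0[OF assms(2)] False by (simp add: f_def)
    qed (simp add: f_def)
    have "\<bar>disc_mean \<phi> z R\<bar> = \<bar>\<integral>w. f w * step_kernel R z w \<partial>lborel\<bar> / pi"
      unfolding disc_mean_def eq by simp
    also have "\<bar>\<integral>w. f w * step_kernel R z w \<partial>lborel\<bar> \<le> (\<integral>w. B / R\<^sup>2 * \<bar>f w\<bar> \<partial>lborel)"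
    proof (rule integral_abs_bound_integral)
      show "integrable lborel (\<lambda>w. f w * step_kernel R z w)"
        using assms(1) B unfolding set_integrable_def f_def
        by (intro integrable_mult_bounded[where f = f, unfolded f_def]) auto
      show "integrable lborel (\<lambda>w. B / R\<^sup>2 * \<bar>f w\<bar>)"
        using assms(1) unfolding set_integrable_def f_def by auto
      show "\<bar>f w * step_kernel R z w\<bar> \<le> B / R\<^sup>2 * \<bar>f w\<bar>" for w
        using mult_left_mono[OF B[of R z w], of "\<bar>f w\<bar>"] by (simp add: abs_mult mult.commute)
    qed
    finally show ?thesis
      by (simp add: divide_right_mono)
  qed
  then show ?thesis
    by blast
qed

lemma distr_laplacian_onD:
  assumes "distr_laplacian_on U \<phi> \<nu>"
  shows "sets \<nu> = sets borel" and "emeasure \<nu> (- U) = 0"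
    and "AE z in lborel. z \<in> U \<longrightarrow> \<phi> z \<noteq> - \<infinity>"
    and "\<And>K. compact K \<Longrightarrow> K \<subseteq> U \<Longrightarrow> set_integrable lborel K (\<lambda>z. real_of_ereal (\<phi> z))"
    and "\<And>\<psi>. test_fun U \<psi> \<Longrightarrow> (\<integral>z. real_of_ereal (\<phi> z) * laplacian \<psi> z \<partial>lborel) = (\<integral>z. \<psi> z \<partial>\<nu>)"
  using assms by (auto simp: distr_laplacian_on_def)

lemma ennreal_integral_le_nn_integral:
  fixes f :: "'a \<Rightarrow> real"
  assumes "\<And>x. 0 \<le> f x"
  shows "ennreal (integral\<^sup>L M f) \<le> (\<integral>\<^sup>+x. ennreal (f x) \<partial>M)"
proof (cases "integrable M f")
  case True
  then show ?thesis
    using nn_integral_eq_integral[OF True] assms by simp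
next
  case False
  then show ?thesis
    by (simp add: not_integrable_integral_eq)
qed

lemma usc_onE_ball:
  assumes "open U" and "usc_on U \<phi>" and "z \<in> U" and "\<phi> z < c"
  obtains d where "d > 0" and "\<And>w. w \<in> ball z d \<Longrightarrow> \<phi> w < c"
proof -
  have "\<forall>\<^sub>F w in at z. \<phi> w < c"
    using assms(2,4) at_within_open[OF assms(3,1)] by (metis usc_on_def assms(3))
  then obtain d where "d > 0" and d: "\<And>w. w \<noteq> z \<Longrightarrow> dist w z < d \<Longrightarrow> \<phi> w < c"
    unfolding eventually_at by auto
  have "\<phi> w < c" if "w \<in> ball z d" for w
    using d[of w] that assms(4) by (cases "w = z") (auto simp: dist_commute)
  with \<open>d > 0\<close> show ?thesis
    using that by blast
qed

context
  fixes U :: "complex set" and \<phi> :: "complex \<Rightarrow> ereal" and \<nu> :: "complex measure"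
  assumes U: "open U" and usc: "usc_on U \<phi>" and lt_top: "\<forall>z\<in>U. \<phi> z < \<infinity>"
    and laplacian: "distr_laplacian_on U \<phi> \<nu>"
begin

lemma disc_mean_le_potential:
  assumes z: "z \<in> U" and R: "R > 0" and RU: "cball z R \<subseteq> U" and c: "\<phi> z < ereal c"
  shows "ennreal (2 * pi * (disc_mean \<phi> z R - c)) \<le> (\<integral>\<^sup>+w. log_kernel z R w \<partial>\<nu>)"
proof -
  obtain d where d: "d > 0" "\<And>w. w \<in> ball z d \<Longrightarrow> \<phi> w < ereal c"
    using usc_onE_ball[OF U usc z c] by blast
  define \<epsilon> where "\<epsilon> = min d R"
  have \<epsilon>: "0 < \<epsilon>" "\<epsilon> \<le> R" "ball z \<epsilon> \<subseteq> ball z d"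
    using d R by (auto simp: \<epsilon>_def)
  define \<psi> where "\<psi> = log_test_fun \<epsilon> R z"
  define f where "f w = real_of_ereal (\<phi> w)" for w
  have int_K: "set_integrable lborel (cball z R) f"
    unfolding f_def using distr_laplacian_onD(4)[OF laplacian compact_cball RU] .
  have int_R: "integrable lborel (\<lambda>w. f w * step_kernel R z w)"
    using int_K R by (intro set_integrable_mult_step_kernel) auto
  have int_\<epsilon>: "integrable lborel (\<lambda>w. f w * step_kernel \<epsilon> z w)"
    using int_K \<epsilon> by (intro set_integrable_mult_step_kernel) auto
  text \<open>\<^term>\<open>real_of_ereal\<close> maps \<open>-\<infinity>\<close> to \<open>0\<close>, so \<open>f \<le> c\<close> near \<open>z\<close> only holds where
    \<open>\<phi> \<noteq> -\<infinity>\<close>, which is almost everywhere.\<close>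
  have "AE w in lborel. w \<in> ball z \<epsilon> \<longrightarrow> f w \<le> c"
    using distr_laplacian_onD(3)[OF laplacian]
  proof eventually_elim
    case (elim w)
    show ?case
    proof
      assume "w \<in> ball z \<epsilon>"
      then have "w \<in> U" and "\<phi> w < ereal c"
        using \<epsilon>(2,3) RU d(2) by auto
      with elim show "f w \<le> c"
        unfolding f_def by (cases "\<phi> w") auto
    qed
  qed
  with int_\<epsilon> \<epsilon>(1) have inner: "(\<integral>w. f w * step_kernel \<epsilon> z w \<partial>lborel) \<le> c * pi"
    by (rule integral_mult_step_kernel_le)
  have "(\<integral>w. f w * laplacian \<psi> w \<partial>lborel)
      = (\<integral>w. 4 * (f w * step_kernel R z w) - 4 * (f w * step_kernel \<epsilon> z w) \<partial>lborel)"
    by (intro Bochner_Integration.integral_cong refl)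
      (simp add: \<psi>_def laplacian_log_test_fun[OF \<epsilon>(1,2)] algebra_simps)
  also have "\<dots> = 4 * (\<integral>w. f w * step_kernel R z w \<partial>lborel) - 4 * (\<integral>w. f w * step_kernel \<epsilon> z w \<partial>lborel)"
    using int_R int_\<epsilon> by simp
  also have "\<dots> = 4 * pi * disc_mean \<phi> z R - 4 * (\<integral>w. f w * step_kernel \<epsilon> z w \<partial>lborel)"
    by (simp add: disc_mean_def f_def)
  finally have "2 * pi * (disc_mean \<phi> z R - c) \<le> (\<integral>w. \<psi> w / 2 \<partial>\<nu>)"
    using inner distr_laplacian_onD(5)[OF laplacian test_fun_log_test_fun[OF \<epsilon>(1,2) RU]]
    by (simp add: \<psi>_def f_def algebra_simps)
  then have "ennreal (2 * pi * (disc_mean \<phi> z R - c)) \<le> ennreal (\<integral>w. \<psi> w / 2 \<partial>\<nu>)"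
    by (rule ennreal_leI)
  also have "\<dots> \<le> (\<integral>\<^sup>+w. ennreal (\<psi> w / 2) \<partial>\<nu>)"
    using log_test_fun_nonneg[OF \<epsilon>(1,2)] by (intro ennreal_integral_le_nn_integral) (simp add: \<psi>_def)
  also have "\<dots> \<le> (\<integral>\<^sup>+w. log_kernel z R w \<partial>\<nu>)"
    unfolding \<psi>_def by (intro nn_integral_mono log_test_fun_le_log_kernel \<epsilon>(1,2))
  finally show ?thesis .
qed

lemma exp_neg_le_disc_mean_potential:
  assumes z: "z \<in> U" and R: "R > 0" and RU: "cball z R \<subseteq> U"
  shows "exp_neg (\<phi> z)
    \<le> ennreal (exp (- disc_mean \<phi> z R)) * ennexp (ennreal (1 / (2 * pi)) * (\<integral>\<^sup>+w. log_kernel z R w \<partial>\<nu>))"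
proof (cases "(\<integral>\<^sup>+w. log_kernel z R w \<partial>\<nu>) = \<infinity>")
  case True
  then show ?thesis
    by (simp add: ennexp_def ennreal_mult_top)
next
  case False
  then obtain k where k: "(\<integral>\<^sup>+w. log_kernel z R w \<partial>\<nu>) = ennreal k" "k \<ge> 0"
    by (cases "(\<integral>\<^sup>+w. log_kernel z R w \<partial>\<nu>)") auto
  have "ereal (disc_mean \<phi> z R - k / (2 * pi)) \<le> \<phi> z"
  proof (rule ccontr)
    assume "\<not> ereal (disc_mean \<phi> z R - k / (2 * pi)) \<le> \<phi> z"
    then have "\<phi> z < ereal (disc_mean \<phi> z R - k / (2 * pi))"
      by simp
    then obtain c where c: "\<phi> z < ereal c" "ereal c < ereal (disc_mean \<phi> z R - k / (2 * pi))"
      using ereal_dense2 by blast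
    have "ennreal (2 * pi * (disc_mean \<phi> z R - c)) \<le> ennreal k"
      using disc_mean_le_potential[OF z R RU c(1)] k(1) by simp
    then have "2 * pi * (disc_mean \<phi> z R - c) \<le> k"
      using k(2) by (simp add: ennreal_le_iff)
    then have "disc_mean \<phi> z R - k / (2 * pi) \<le> c"
      by (simp add: field_simps)
    with c(2) show False
      by simp
  qed
  moreover have "\<phi> z < \<infinity>"
    using lt_top z by blast
  ultimately obtain p where p: "\<phi> z = ereal p" "disc_mean \<phi> z R - k / (2 * pi) \<le> p"
    by (cases "\<phi> z") auto
  then have "exp (- p) \<le> exp (- disc_mean \<phi> z R) * exp (k / (2 * pi))"
    by (simp add: exp_add[symmetric])
  then have "exp_neg (\<phi> z) \<le> ennreal (exp (- disc_mean \<phi> z R) * exp (k / (2 * pi)))"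
    using p(1) by (simp add: exp_neg_def ennreal_leI)
  also have "\<dots> = ennreal (exp (- disc_mean \<phi> z R)) * ennreal (exp (k / (2 * pi)))"
    by (rule ennreal_mult) auto
  also have "ennreal (exp (k / (2 * pi))) = ennexp (ennreal (1 / (2 * pi)) * (\<integral>\<^sup>+w. log_kernel z R w \<partial>\<nu>))"
    using k by (simp add: ennexp_def ennreal_mult[symmetric])
  finally show ?thesis .
qed

lemma exp_neg_le_potential_on_compact:
  assumes \<Gamma>: "compact \<Gamma>" "\<Gamma> \<subseteq> U" and M: "emeasure \<nu> (space \<nu>) = ennreal M" "M \<ge> 0"
  defines "m \<equiv> M / (2 * pi)"
  obtains C R where "\<And>z. z \<in> \<Gamma> \<Longrightarrow>
    exp_neg (\<phi> z) \<le> ennreal C * (1 + ennreal (R powr m / M) * (\<integral>\<^sup>+w. inv_powr m (cmod (w - z)) \<partial>\<nu>))"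
proof -
  obtain \<epsilon> where \<epsilon>: "\<epsilon> > 0" "(\<Union>x\<in>\<Gamma>. cball x \<epsilon>) \<subseteq> U"
    using compact_subset_open_imp_cball_epsilon_subset[OF \<Gamma>(1) U \<Gamma>(2)] by blast
  define R where "R = \<epsilon> / 2"
  have R: "R > 0"
    using \<epsilon> by (simp add: R_def)
  define K where "K = {x + w | x w. x \<in> \<Gamma> \<and> w \<in> cball 0 R}"
  have "compact K"
    unfolding K_def by (intro compact_sums \<Gamma>(1) compact_cball)
  moreover have "K \<subseteq> U"
    using \<epsilon> by (force simp: K_def R_def dist_norm)
  ultimately obtain C0 where C0: "\<And>z. cball z R \<subseteq> K \<Longrightarrow> \<bar>disc_mean \<phi> z R\<bar> \<le> C0"
    using disc_mean_bounded[OF distr_laplacian_onD(4)[OF laplacian] R] by blast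
  have ball_K: "cball z R \<subseteq> K" if "z \<in> \<Gamma>" for z
  proof
    fix v
    assume "v \<in> cball z R"
    then have "v = z + (v - z)" "v - z \<in> cball 0 R"
      by (auto simp: dist_norm norm_minus_commute)
    then show "v \<in> K"
      unfolding K_def using that by blast
  qed
  have "exp_neg (\<phi> z)
      \<le> ennreal (exp C0) * (1 + ennreal (R powr m / M) * (\<integral>\<^sup>+w. inv_powr m (cmod (w - z)) \<partial>\<nu>))"
    if z: "z \<in> \<Gamma>" for z
  proof -
    have RU: "cball z R \<subseteq> U"
      using ball_K[OF z] \<open>K \<subseteq> U\<close> by blast
    have "exp_neg (\<phi> z)
        \<le> ennreal (exp (- disc_mean \<phi> z R)) * ennexp (ennreal (1 / (2 * pi)) * (\<integral>\<^sup>+w. log_kernel z R w \<partial>\<nu>))"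
      using z \<Gamma>(2) R RU by (intro exp_neg_le_disc_mean_potential) auto
    also have "\<dots> \<le> ennreal (exp C0) * (1 + ennreal (R powr m / M) * (\<integral>\<^sup>+w. inv_powr m (cmod (w - z)) \<partial>\<nu>))"
      using C0[OF ball_K[OF z]] ennexp_potential_le[OF distr_laplacian_onD(1)[OF laplacian] M R]
      unfolding m_def by (intro mult_mono ennreal_leI) auto
    finally show ?thesis .
  qed
  with that show ?thesis
    by blast
qed

end

section \<open>Integration along the curve\<close>

lemma potential_on_line:
  fixes \<nu> :: "complex measure"
  assumes "finite_measure \<nu>" and sets: "sets \<nu> = sets borel" and m: "0 \<le> m" "m < 1"
  shows "(\<lambda>t. \<integral>\<^sup>+w. inv_powr m \<bar>Re w - t\<bar> \<partial>\<nu>) \<in> borel_measurable borel"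
    and "(\<integral>\<^sup>+t. (\<integral>\<^sup>+w. inv_powr m \<bar>Re w - t\<bar> \<partial>\<nu>) * indicator {a..b} t \<partial>lborel)
      \<le> ennreal (2 / (1 - m) + \<bar>b - a\<bar>) * emeasure \<nu> (space \<nu>)"
proof -
  interpret \<nu>: finite_measure \<nu>
    by fact
  interpret pair_sigma_finite lborel \<nu>
    by (intro pair_sigma_finite.intro lborel.sigma_finite_measure_axioms \<nu>.sigma_finite_measure_axioms)
  have h: "(\<lambda>(t, w). inv_powr m \<bar>Re w - t\<bar> * indicator {a..b} t) \<in> borel_measurable (lborel \<Otimes>\<^sub>M \<nu>)"
    and "(\<lambda>(t, w). inv_powr m \<bar>Re w - t\<bar>) \<in> borel_measurable (lborel \<Otimes>\<^sub>M \<nu>)"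
    unfolding sets_pair_measure_cong[OF refl sets, THEN measurable_cong_sets[OF _ refl]] by measurable
  then show "(\<lambda>t. \<integral>\<^sup>+w. inv_powr m \<bar>Re w - t\<bar> \<partial>\<nu>) \<in> borel_measurable borel"
    using \<nu>.borel_measurable_nn_integral by (simp add: measurable_lborel1[symmetric])
  have "(\<integral>\<^sup>+t. (\<integral>\<^sup>+w. inv_powr m \<bar>Re w - t\<bar> \<partial>\<nu>) * indicator {a..b} t \<partial>lborel)
      = (\<integral>\<^sup>+t. (\<integral>\<^sup>+w. inv_powr m \<bar>Re w - t\<bar> * indicator {a..b} t \<partial>\<nu>) \<partial>lborel)"
    by (intro nn_integral_cong nn_integral_multc[symmetric])
      (auto simp: measurable_cong_sets[OF sets refl])
  also have "\<dots> = (\<integral>\<^sup>+w. (\<integral>\<^sup>+t. inv_powr m \<bar>Re w - t\<bar> * indicator {a..b} t \<partial>lborel) \<partial>\<nu>)"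
    using Fubini'[OF h] by simp
  also have "\<dots> \<le> (\<integral>\<^sup>+w. ennreal (2 / (1 - m) + \<bar>b - a\<bar>) \<partial>\<nu>)"
    by (intro nn_integral_mono nn_integral_inv_powr_interval[OF m])
  finally show "(\<integral>\<^sup>+t. (\<integral>\<^sup>+w. inv_powr m \<bar>Re w - t\<bar> \<partial>\<nu>) * indicator {a..b} t \<partial>lborel)
      \<le> ennreal (2 / (1 - m) + \<bar>b - a\<bar>) * emeasure \<nu> (space \<nu>)"
    by simp
qed

lemma lipschitz_on_has_real_derivative_bound:
  fixes y :: "real \<Rightarrow> real"
  assumes lip: "L-lipschitz_on {a..b} y" and t: "a < t" "t < b"
    and D: "(y has_real_derivative D) (at t)"
  shows "\<bar>D\<bar> \<le> L"
proof -
  have lim: "((\<lambda>x. (y x - y t) / (x - t)) \<longlongrightarrow> D) (at t)"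
    using D by (simp add: has_field_derivative_iff)
  have "\<forall>\<^sub>F x in at t. x \<in> {a<..<b}"
    using t by (intro eventually_at_in_open') auto
  moreover have "\<forall>\<^sub>F x in at t. x \<noteq> t"
    by (simp add: eventually_at_filter)
  ultimately have "\<forall>\<^sub>F x in at t. \<bar>(y x - y t) / (x - t)\<bar> \<le> L"
  proof eventually_elim
    case (elim x)
    have "dist (y x) (y t) \<le> L * dist x t"
      using elim t by (intro lipschitz_onD[OF lip]) auto
    with elim show ?case
      by (simp add: dist_real_def abs_divide divide_le_eq)
  qed
  then show ?thesis
    using tendsto_upperbound[OF tendsto_rabs[OF lim]] by simp
qed

text \<open>Where \<open>y\<close> is not differentiable, \<^term>\<open>deriv y t\<close> is the junk value \<^term>\<open>SOME D::real. False\<close>,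
  so besides \<open>[-L, L]\<close> only this value and the derivatives at the endpoints occur.\<close>

lemma lipschitz_on_deriv_bounded:
  fixes y :: "real \<Rightarrow> real"
  assumes lip: "L-lipschitz_on {a..b} y"
  shows "bounded (deriv y ` {a..b})"
proof -
  have "deriv y ` {a..b} \<subseteq> cball 0 L \<union> {deriv y a, deriv y b, SOME D::real. False}"
  proof
    fix d
    assume "d \<in> deriv y ` {a..b}"
    then obtain t where t: "t \<in> {a..b}" "d = deriv y t"
      by blast
    show "d \<in> cball 0 L \<union> {deriv y a, deriv y b, SOME D::real. False}"
    proof (cases "t = a \<or> t = b")
      case True
      then show ?thesis
        using t by auto
    next
      case interior: False
      show ?thesis
      proof (cases "\<exists>D. (y has_real_derivative D) (at t)")
        case True
        then obtain D where D: "(y has_real_derivative D) (at t)"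
          by blast
        then have "deriv y t = D"
          by (rule DERIV_imp_deriv)
        moreover have "\<bar>D\<bar> \<le> L"
          using interior t by (intro lipschitz_on_has_real_derivative_bound[OF lip _ _ D]) auto
        ultimately show ?thesis
          using t by simp
      next
        case False
        then have "(\<lambda>D. (y has_real_derivative D) (at t)) = (\<lambda>D. False)"
          by auto
        then show ?thesis
          using t by (simp add: deriv_def)
      qed
    qed
  qed
  then show ?thesis
    by (rule bounded_subset[rotated]) simp
qed

lemma nn_integral_interval_finite_if_potential_bounded:
  fixes \<nu> :: "complex measure" and g :: "real \<Rightarrow> ennreal" and z :: "real \<Rightarrow> complex"
  assumes \<nu>: "finite_measure \<nu>" "sets \<nu> = sets borel" and m: "0 \<le> m" "m < 1"
    and "K < \<infinity>" "c < \<infinity>" and Re_z: "\<And>t. Re (z t) = t"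
    and g: "\<And>t. t \<in> {a..b} \<Longrightarrow> g t \<le> K * (1 + c * (\<integral>\<^sup>+w. inv_powr m (cmod (w - z t)) \<partial>\<nu>))"
  shows "(\<integral>\<^sup>+t. g t * indicator {a..b} t \<partial>lborel) < \<infinity>"
proof -
  define P where "P t = (\<integral>\<^sup>+w. inv_powr m \<bar>Re w - t\<bar> \<partial>\<nu>)" for t
  have "g t * indicator {a..b} t \<le> K * (indicator {a..b} t + c * (P t * indicator {a..b} t))" for t
  proof (cases "t \<in> {a..b}")
    case True
    have "(\<integral>\<^sup>+w. inv_powr m (cmod (w - z t)) \<partial>\<nu>) \<le> P t"
      unfolding P_def using m abs_Re_le_cmod[of "w - z t" for w] Re_z[of t]
      by (intro nn_integral_mono inv_powr_antimono) auto
    then have "K * (1 + c * (\<integral>\<^sup>+w. inv_powr m (cmod (w - z t)) \<partial>\<nu>)) \<le> K * (1 + c * P t)"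
      by (intro mult_left_mono add_left_mono) auto
    with g[OF True] show ?thesis
      using True by simp
  qed simp
  then have "(\<integral>\<^sup>+t. g t * indicator {a..b} t \<partial>lborel)
      \<le> (\<integral>\<^sup>+t. K * (indicator {a..b} t + c * (P t * indicator {a..b} t)) \<partial>lborel)"
    by (rule nn_integral_mono)
  also have "\<dots> = K * (emeasure lborel {a..b} + c * (\<integral>\<^sup>+t. P t * indicator {a..b} t \<partial>lborel))"
    using potential_on_line(1)[OF \<nu> m] by (simp add: P_def nn_integral_cmult nn_integral_add)
  also have "\<dots> \<le> K * (emeasure lborel {a..b}
      + c * (ennreal (2 / (1 - m) + \<bar>b - a\<bar>) * emeasure \<nu> (space \<nu>)))"
    using potential_on_line(2)[OF \<nu> m, of a b]
    by (intro mult_left_mono add_left_mono) (auto simp: P_def)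
  also have "\<dots> < \<infinity>"
    using assms(5,6) finite_measure.emeasure_finite[OF \<nu>(1), of "space \<nu>"]
    by (simp add: ennreal_mult_eq_top_iff emeasure_lborel_Icc_eq less_top[symmetric])
  finally show ?thesis .
qed

lemma distr_laplacian_on_total_mass:
  assumes "distr_laplacian_on U \<phi> \<nu>" and "open U" and "emeasure \<nu> U / ennreal (2 * pi) < 1"
  obtains M where "emeasure \<nu> (space \<nu>) = ennreal M" and "0 \<le> M" and "M < 2 * pi"
proof -
  note sets = distr_laplacian_onD(1)[OF assms(1)]
  have "space \<nu> = U \<union> - U"
    using sets_eq_imp_space_eq[OF sets] by simp
  moreover have "U \<in> sets \<nu>" "- U \<in> sets \<nu>"
    using sets assms(2) by auto
  ultimately have "emeasure \<nu> (space \<nu>) = emeasure \<nu> U"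
    using plus_emeasure[of U \<nu> "- U"] distr_laplacian_onD(2)[OF assms(1)] by simp
  with assms(3) have "emeasure \<nu> (space \<nu>) < ennreal (2 * pi)"
    by (simp add: divide_less_ennreal)
  with that show ?thesis
    by (cases "emeasure \<nu> (space \<nu>)") (auto simp: ennreal_less_iff)
qed

lemma lipschitz_on_arc_length_density_bounded:
  fixes y :: "real \<Rightarrow> real"
  assumes "L-lipschitz_on {a..b} y"
  obtains S where "\<And>t. t \<in> {a..b} \<Longrightarrow> sqrt (1 + (deriv y t)\<^sup>2) \<le> S"
proof -
  obtain B where B: "\<And>t. t \<in> {a..b} \<Longrightarrow> \<bar>deriv y t\<bar> \<le> B"
    using lipschitz_on_deriv_bounded[OF assms] unfolding bounded_real by blast
  have "sqrt (1 + (deriv y t)\<^sup>2) \<le> 1 + B" if "t \<in> {a..b}" for t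
    using sqrt_sum_squares_le_sum_abs[of 1 "deriv y t"] B[OF that] by simp
  with that show ?thesis
    by blast
qed

theorem corollary2p10:
  fixes a b L :: real and y :: "real \<Rightarrow> real" and U :: "complex set"
    and \<phi> :: "complex \<Rightarrow> ereal" and \<nu> :: "complex measure"
  assumes "a < b"
    and "L-lipschitz_on {a..b} y"
    and "open U"
    and "(\<lambda>t. Complex t (y t)) ` {a..b} \<subseteq> U"
    and "subharmonic_on U \<phi>"
    and "distr_laplacian_on U \<phi> \<nu>"
    and "emeasure \<nu> U / ennreal (2 * pi) < 1"
  shows "(\<integral>\<^sup>+ t. exp_neg (\<phi> (Complex t (y t))) * ennreal (sqrt (1 + (deriv y t)\<^sup>2))
            * indicator {a..b} t \<partial>lborel) < \<infinity>"
proof -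
  note lip = assms(2) and laplacian = assms(6)
  have usc: "usc_on U \<phi>" and lt_top: "\<forall>z\<in>U. \<phi> z < \<infinity>"
    using assms(5) by (auto simp: subharmonic_on_def)
  obtain M where M: "emeasure \<nu> (space \<nu>) = ennreal M" "0 \<le> M" "M < 2 * pi"
    using distr_laplacian_on_total_mass[OF laplacian assms(3,7)] .
  define m where "m = M / (2 * pi)"
  have "continuous_on {a..b} (\<lambda>t. Complex t (y t))"
    unfolding Complex_eq using lipschitz_on_continuous_on[OF lip] by (intro continuous_intros)
  then have "compact ((\<lambda>t. Complex t (y t)) ` {a..b})"
    by (rule compact_continuous_image) simp
  then obtain C R where C: "\<And>z. z \<in> (\<lambda>t. Complex t (y t)) ` {a..b} \<Longrightarrow> exp_neg (\<phi> z)
      \<le> ennreal C * (1 + ennreal (R powr m / M) * (\<integral>\<^sup>+w. inv_powr m (cmod (w - z)) \<partial>\<nu>))"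
    using exp_neg_le_potential_on_compact[OF assms(3) usc lt_top laplacian _ assms(4) M(1,2)]
    unfolding m_def by blast
  obtain S where S: "\<And>t. t \<in> {a..b} \<Longrightarrow> sqrt (1 + (deriv y t)\<^sup>2) \<le> S"
    using lipschitz_on_arc_length_density_bounded[OF lip] by blast
  show ?thesis
  proof (rule nn_integral_interval_finite_if_potential_bounded)
    show "finite_measure \<nu>" "sets \<nu> = sets borel"
      using M(1) distr_laplacian_onD(1)[OF laplacian] by (auto intro: finite_measureI)
    show "0 \<le> m" "m < 1"
      using M by (auto simp: m_def)
    fix t
    assume t: "t \<in> {a..b}"
    show "exp_neg (\<phi> (Complex t (y t))) * ennreal (sqrt (1 + (deriv y t)\<^sup>2))
      \<le> ennreal C * ennreal S
        * (1 + ennreal (R powr m / M) * (\<integral>\<^sup>+w. inv_powr m (cmod (w - Complex t (y t))) \<partial>\<nu>))"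
      using mult_mono[OF C[OF imageI[OF t]] ennreal_leI[OF S[OF t]]] by (simp add: mult_ac)
  qed (simp_all add: ennreal_mult_less_top)
qed
end
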